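(* Let $m\in\mathbb{Z}_{>0}$ and $n\in\mathbb{Z}_{\ge0}$ have the same parity, and let $\psi:\mathcal{G}^{(m,n)}\to\mathbb{C}$ be a Whittaker function. Then the Whittaker module $W_{\psi}=\mathrm{Ind}_{\mathcal{G}^{(m,n)}}^{\mathcal{G}}\mathbb{C}w_\psi=\mathcal{U}(\mathcal{G})\otimes_{\mathcal{U}(\mathcal{G}^{(m,n)})}\mathbb{C}w_\psi$ is an irreducible $\mathcal{G}$-module if and only if $\psi(I_{m+n-1})\,\psi(J_{m+n-1})\ne0$.
   Context: $\mathcal{G}$ is the complex Lie algebra with basis $\{L_n,H_n,I_n,J_n,\mathbf{c}_1,\mathbf{c}_2,\mathbf{c}_3: n\in\mathbb{Z}\}$ whose brackets of basis elements are $[L_m,L_n]=(n-m)L_{m+n}+\frac{m^3-m}{12}\delta_{m+n,0}\mathbf{c}_1$, $[L_m,H_n]=nH_{m+n}+m^2\delta_{m+n,0}\mathbf{c}_2$, $[H_m,H_n]=m\delta_{m+n,0}\mathbf{c}_3$, $[L_m,I_n]=(n-m)I_{m+n}$, $[L_m,J_n]=(n-m)J_{m+n}$, $[H_m,I_n]=I_{m+n}$, $[H_m,J_n]=-J_{m+n}$ (and antisymmetric counterparts), all other brackets of basis elements zero (this is the universal central extension of the planar Galilean conformal algebra). For $m,n\ge0$, $\mathcal{G}^{(m,n)}=\sum_{i\ge0}(\mathbb{C}L_{m+i}+\mathbb{C}H_{m+i}+\mathbb{C}I_{n+i}+\mathbb{C}J_{n+i})+\sum_{k=1}^3\mathbb{C}\mathbf{c}_k$.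 A Whittaker function is a Lie algebra homomorphism $\psi:\mathcal{G}^{(m,n)}\to\mathbb{C}$, and $\mathbb{C}w_\psi$ is the one-dimensional $\mathcal{G}^{(m,n)}$-module with $xw_\psi=\psi(x)w_\psi$. *)

theory Defs
  imports Complex_Main
begin

section \<open>The Lie algebra G (universal central extension of the planar Galilean conformal algebra)\<close>

datatype gb = L int | H int | I int | J int | C1 | C2 | C3

text \<open>Elements of G are represented as coefficient functions gb => complex (finitely supported).
  The bracket of two basis elements, as an element of G.\<close>
fun br :: "gb \<Rightarrow> gb \<Rightarrow> gb \<Rightarrow> complex" where
  "br (L a) (L b) = (\<lambda>x. (if x = L (a + b) then of_int (b - a) else 0)
        + (if x = C1 \<and> a + b = 0 then of_int (a^3 - a) / 12 else 0))"
| "br (L a) (H b) = (\<lambda>x. (if x = H (a + b) then of_int b else 0)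
        + (if x = C2 \<and> a + b = 0 then of_int (a^2) else 0))"
| "br (H a) (L b) = (\<lambda>x. (if x = H (a + b) then - of_int a else 0)
        + (if x = C2 \<and> a + b = 0 then - of_int (b^2) else 0))"
| "br (H a) (H b) = (\<lambda>x. if x = C3 \<and> a + b = 0 then of_int a else 0)"
| "br (L a) (I b) = (\<lambda>x. if x = I (a + b) then of_int (b - a) else 0)"
| "br (I b) (L a) = (\<lambda>x. if x = I (a + b) then of_int (a - b) else 0)"
| "br (L a) (J b) = (\<lambda>x. if x = J (a + b) then of_int (b - a) else 0)"
| "br (J b) (L a) = (\<lambda>x. if x = J (a + b) then of_int (a - b) else 0)"
| "br (H a) (I b) = (\<lambda>x. if x = I (a + b) then 1 else 0)"
| "br (I b) (H a) = (\<lambda>x. if x = I (a + b) then -1 else 0)"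
| "br (H a) (J b) = (\<lambda>x. if x = J (a + b) then -1 else 0)"
| "br (J b) (H a) = (\<lambda>x. if x = J (a + b) then 1 else 0)"
| "br _ _ = (\<lambda>x. 0)"

definition Gsub_basis :: "nat \<Rightarrow> nat \<Rightarrow> gb set" where
  "Gsub_basis m n = {L k | k. k \<ge> int m} \<union> {H k | k. k \<ge> int m}
     \<union> {I k | k. k \<ge> int n} \<union> {J k | k. k \<ge> int n} \<union> {C1, C2, C3}"

text \<open>A Whittaker function psi is determined by its values on the basis of G^(m,n)
  (extended linearly); its values on other basis symbols are irrelevant.  It is a Lie
  algebra homomorphism into the abelian Lie algebra C iff it kills all brackets of basis
  elements of G^(m,n).\<close>
definition whittaker_fun :: "nat \<Rightarrow> nat \<Rightarrow> (gb \<Rightarrow> complex) \<Rightarrow> bool" where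
  "whittaker_fun m n \<psi> \<longleftrightarrow>
     (\<forall>x\<in>Gsub_basis m n. \<forall>y\<in>Gsub_basis m n.
        (\<Sum>z\<in>{z. br x y z \<noteq> 0}. br x y z * \<psi> z) = 0)"

text \<open>Elements of the tensor algebra: coefficient functions on words of basis symbols
  (we only use finitely supported ones).\<close>
type_synonym tens = "gb list \<Rightarrow> complex"

definition Tfin :: "tens set" where
  "Tfin = {f. finite {w. f w \<noteq> 0}}"

definition mono :: "gb list \<Rightarrow> tens" where
  "mono u = (\<lambda>w. if w = u then 1 else 0)"

definition deg1 :: "(gb \<Rightarrow> complex) \<Rightarrow> tens" where
  "deg1 g = (\<lambda>w. case w of [b] \<Rightarrow> g b | _ \<Rightarrow> 0)"

definition tmul :: "tens \<Rightarrow> tens \<Rightarrow> tens" where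
  "tmul f g = (\<lambda>w. \<Sum>k\<le>length w. f (take k w) * g (drop k w))"

definition subsp :: "tens set \<Rightarrow> bool" where
  "subsp S \<longleftrightarrow> (\<lambda>w. 0) \<in> S \<and> (\<forall>f\<in>S. \<forall>g\<in>S. (\<lambda>w. f w + g w) \<in> S)
      \<and> (\<forall>c. \<forall>f\<in>S. (\<lambda>w. c * f w) \<in> S)"

definition lspan :: "tens set \<Rightarrow> tens set" where
  "lspan A = \<Inter>{S. subsp S \<and> A \<subseteq> S}"

text \<open>Relation x y - y x - [x,y] defining U(G) as a quotient of T(G).\<close>
definition rel :: "gb \<Rightarrow> gb \<Rightarrow> tens" where
  "rel x y = (\<lambda>w. mono [x, y] w - mono [y, x] w - deg1 (br x y) w)"

text \<open>Kernel N of the projection T(G) -> W_psi = U(G) \<otimes>_{U(G^(m,n))} C w_psi,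
  i.e. the two-sided ideal generated by the relations of U(G) plus the left ideal
  generated by the x - psi(x), x in G^(m,n).  Thus W_psi = Tfin / N, with w_psi the
  class of the empty word and G acting by left multiplication.\<close>
definition Wker :: "nat \<Rightarrow> nat \<Rightarrow> (gb \<Rightarrow> complex) \<Rightarrow> tens set" where
  "Wker m n \<psi> = lspan
     ({tmul (tmul (mono u) (rel x y)) (mono v) | u v x y. True}
      \<union> {tmul (mono u) (\<lambda>w. mono [x] w - \<psi> x * mono [] w) | u x. x \<in> Gsub_basis m n})"

text \<open>G-submodules of W_psi correspond to subspaces S with N <= S <= Tfin stable under
  left multiplication by (the images of) the basis elements of G.\<close>
definition whittaker_module_irreducible :: "nat \<Rightarrow> nat \<Rightarrow> (gb \<Rightarrow> complex) \<Rightarrow> bool" where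
  "whittaker_module_irreducible m n \<psi> \<longleftrightarrow>
     Wker m n \<psi> \<noteq> Tfin \<and>
     (\<forall>S. subsp S \<and> Wker m n \<psi> \<subseteq> S \<and> S \<subseteq> Tfin \<and>
          (\<forall>b. \<forall>f\<in>S. tmul (mono [b]) f \<in> S)
        \<longrightarrow> S = Wker m n \<psi> \<or> S = Tfin)"

end

theory Submission
  imports Defs "HOL-Library.Multiset"
begin

text \<open>
  Order the basis so that the
  basis \<open>B\<close> of \<open>G\<^sup>(\<^sup>m\<^sup>,\<^sup>n\<^sup>)\<close> comes last, and rewrite the first descent \<open>a b\<close> of a word
  to \<open>b a + [a, b]\<close> and a final letter \<open>x \<in> B\<close> to \<open>\<psi> x\<close>. By the diamond lemma (the Jacobi
  identity resolves overlapping descents, and \<open>\<psi>\<close> being a character resolves a descent at the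
  end) the resulting normal form kills \<open>Wker\<close>, so the sorted words in the letters outside \<open>B\<close>
  form a basis of \<open>W\<^sub>\<psi>\<close>.

  Let \<open>p = m + n - 1\<close>. If \<open>\<psi>(I\<^sub>p) \<psi>(J\<^sub>p) \<noteq> 0\<close>, every nonzero submodule contains \<open>w\<^sub>\<psi>\<close>: in the
  normal form of a nonzero vector, suitable combinations of \<open>I\<^bsub>p-i\<^esub> - \<psi>(I\<^bsub>p-i\<^esub>)\<close> and
  \<open>J\<^bsub>p-i\<^esub> - \<psi>(J\<^bsub>p-i\<^esub>)\<close> delete a letter \<open>L\<^sub>i\<close> or \<open>H\<^sub>i\<close> of least index from the words of top
  degree in \<open>L, H\<close>, and once no \<open>L, H\<close> are left, \<open>H\<^bsub>p-j\<^esub>\<close> and \<open>L\<^bsub>p-j\<^esub>\<close> delete letters \<open>I\<^sub>j\<close>,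
  \<open>J\<^sub>j\<close>; the two deletions can be separated because \<open>2 i \<noteq> p\<close> by parity. Conversely, if
  \<open>\<psi>(X\<^sub>p) = 0\<close> for \<open>X \<in> {I, J}\<close>, then \<open>\<psi>\<close> extends to a character of \<open>G\<^sup>(\<^sup>m\<^sup>,\<^sup>n\<^sup>) + \<complex> X\<^bsub>n-1\<^esub>\<close>
  with any value on \<open>X\<^bsub>n-1\<^esub>\<close>, and the module induced from the extension with value \<open>0\<close> is a
  proper nonzero quotient of \<open>W\<^sub>\<psi>\<close>.
\<close>

section \<open>Brackets of basis elements\<close>

definition br_supp :: "gb \<Rightarrow> gb \<Rightarrow> gb set" where
  "br_supp x y = {z. br x y z \<noteq> 0}"

fun gb_index :: "gb \<Rightarrow> int" where
  "gb_index (L i) = i" | "gb_index (H i) = i" | "gb_index (I i) = i" | "gb_index (J i) = i"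
| "gb_index _ = 0"

definition br_range :: "int \<Rightarrow> gb set" where
  "br_range k = {L k, H k, I k, J k, C1, C2, C3}"

lemma finite_br_range [simp]: "finite (br_range k)"
  by (simp add: br_range_def)

lemma br_supp_subset_range: "br_supp x y \<subseteq> br_range (gb_index x + gb_index y)"
  unfolding br_supp_def br_range_def by (cases x; cases y) (auto split: if_splits)

lemma finite_br_supp [simp]: "finite (br_supp x y)"
  by (rule finite_subset[OF br_supp_subset_range]) simp

lemma sum_br_supp_superset:
  "br_supp x y \<subseteq> T \<Longrightarrow> finite T \<Longrightarrow>
   (\<Sum>z\<in>br_supp x y. br x y z * F z) = (\<Sum>z\<in>T. br x y z * F z)"
  by (intro sum.mono_neutral_left) (auto simp: br_supp_def)

lemma sum_br_supp_range:
  "(\<Sum>z\<in>br_supp x y. br x y z * F z) = (\<Sum>z\<in>br_range (gb_index x + gb_index y). br x y z * F z)"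
  by (simp add: sum_br_supp_superset br_supp_subset_range)

lemma sum_br_range:
  "(\<Sum>z\<in>br_range k. G z) = G (L k) + G (H k) + G (I k) + G (J k) + G C1 + G C2 + G C3"
  by (simp add: br_range_def add.assoc)

lemma br_antisym: "br y x z = - br x y z"
proof -
  have solve: "x + y = 0 \<Longrightarrow> y = - x" for x y :: int by simp
  show ?thesis
    by (cases x; cases y) (auto simp: field_simps power2_eq_square power3_eq_cube dest!: solve)
qed

lemma br_self: "br x x z = 0"
  by (cases x) auto

lemma br_supp_antisym: "br_supp y x = br_supp x y"
  by (auto simp: br_supp_def br_antisym[of y x])

lemma sum_br_supp_antisym:
  "(\<Sum>z\<in>br_supp b a. br b a z * F z) = - (\<Sum>z\<in>br_supp a b. br a b z * F z)"
  by (simp add: br_supp_antisym br_antisym[of b a] sum_negf)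

lemma br_supp_self [simp]: "br_supp a a = {}"
  by (simp add: br_supp_def br_self)

lemma br_jacobi:
  "(\<Sum>z\<in>br_supp a b. br a b z * br z c t) + (\<Sum>z\<in>br_supp a c. br a c z * br b z t)
   + (\<Sum>z\<in>br_supp b c. br b c z * br z a t) = 0"
proof -
  \<comment> \<open>solving the index constraint for one variable lets the case split substitute it away\<close>
  have solve: "x + (y + z) = 0 \<Longrightarrow> z = - x - y" "x + y = 0 \<Longrightarrow> y = - x" "x + y = - z \<Longrightarrow> z = - x - y"
    for x y z :: int by simp_all
  show ?thesis
    unfolding sum_br_supp_range sum_br_range
    by (cases a; cases b; cases c; cases t)
       (auto simp: field_simps power2_eq_square power3_eq_cube dest!: solve)
qed

lemma br_supp_central: "z \<in> {C1, C2, C3} \<Longrightarrow> br_supp z w = {} \<and> br_supp w z = {}"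
  by (cases w) (auto simp: br_supp_def)

lemma br_supp_index: "z \<in> br_supp x y \<Longrightarrow> z \<in> {C1, C2, C3} \<or> gb_index z = gb_index x + gb_index y"
  using br_supp_subset_range[of x y] by (auto simp: br_range_def)

lemma br_supp_nested:
  assumes "z \<in> br_supp x y"
  shows "br_supp z w \<subseteq> br_range (gb_index x + gb_index y + gb_index w)"
    and "br_supp w z \<subseteq> br_range (gb_index x + gb_index y + gb_index w)"
  using br_supp_index[OF assms] br_supp_central[of z w] br_supp_subset_range[of z w]
    br_supp_subset_range[of w z] by (auto simp: add_ac)

lemma br_jacobi_sum:
  "(\<Sum>z\<in>br_supp a b. br a b z * (\<Sum>s\<in>br_supp z c. br z c s * F s))
   + (\<Sum>z\<in>br_supp a c. br a c z * (\<Sum>s\<in>br_supp b z. br b z s * F s))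
   + (\<Sum>z\<in>br_supp b c. br b c z * (\<Sum>s\<in>br_supp z a. br z a s * F s)) = 0"
proof -
  define T where "T = br_range (gb_index a + gb_index b + gb_index c)"
  have inner: "(\<Sum>s\<in>br_supp z d. br z d s * F s) = (\<Sum>s\<in>T. br z d s * F s)"
    if "br_supp z d \<subseteq> T" for z d
    using that by (simp add: sum_br_supp_superset T_def)
  have inner': "(\<Sum>s\<in>br_supp d z. br d z s * F s) = (\<Sum>s\<in>T. br d z s * F s)"
    if "br_supp d z \<subseteq> T" for z d
    using that by (simp add: sum_br_supp_superset T_def)
  have "(\<Sum>z\<in>br_supp a b. br a b z * (\<Sum>s\<in>br_supp z c. br z c s * F s))
     + (\<Sum>z\<in>br_supp a c. br a c z * (\<Sum>s\<in>br_supp b z. br b z s * F s))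
     + (\<Sum>z\<in>br_supp b c. br b c z * (\<Sum>s\<in>br_supp z a. br z a s * F s))
     = (\<Sum>z\<in>br_supp a b. br a b z * (\<Sum>s\<in>T. br z c s * F s))
     + (\<Sum>z\<in>br_supp a c. br a c z * (\<Sum>s\<in>T. br b z s * F s))
     + (\<Sum>z\<in>br_supp b c. br b c z * (\<Sum>s\<in>T. br z a s * F s))"
    using br_supp_nested[of _ a b c] br_supp_nested[of _ a c b] br_supp_nested[of _ b c a]
    by (intro arg_cong2[where f = "(+)"] sum.cong refl; subst inner inner'; simp add: T_def add_ac)
  also have "\<dots> = (\<Sum>s\<in>T. F s * ((\<Sum>z\<in>br_supp a b. br a b z * br z c s)
      + (\<Sum>z\<in>br_supp a c. br a c z * br b z s) + (\<Sum>z\<in>br_supp b c. br b c z * br z a s)))"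
    by (simp add: sum_distrib_left sum_distrib_right sum.distrib algebra_simps sum.swap[of _ T])
  also have "\<dots> = 0" by (simp add: br_jacobi)
  finally show ?thesis .
qed

section \<open>Normal forms of words\<close>

fun gb_rank :: "gb \<Rightarrow> int" where
  "gb_rank (L i) = 8 * i" | "gb_rank (H i) = 8 * i + 1" | "gb_rank (I i) = 8 * i + 2"
| "gb_rank (J i) = 8 * i + 3" | "gb_rank C1 = 4" | "gb_rank C2 = 5" | "gb_rank C3 = 6"

lemma gb_rank_inj: "gb_rank x = gb_rank y \<Longrightarrow> x = y"
  by (cases x; cases y; simp; presburger)

instantiation gb :: linorder
begin
definition "less_eq_gb x y \<longleftrightarrow> gb_rank x \<le> gb_rank y"
definition "less_gb x y \<longleftrightarrow> gb_rank x < gb_rank y"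
instance by standard (auto simp: less_eq_gb_def less_gb_def intro: gb_rank_inj)
end

text \<open>Letters of the subalgebra basis \<open>B\<close> are greater than all others, so that they are moved to
  the right end of a word, where they act by the character.\<close>
definition pbw_gt :: "gb set \<Rightarrow> gb \<Rightarrow> gb \<Rightarrow> bool" where
  "pbw_gt B x y \<longleftrightarrow> (x \<in> B \<and> y \<notin> B) \<or> ((x \<in> B \<longleftrightarrow> y \<in> B) \<and> y < x)"

lemma pbw_gt_asym: "pbw_gt B x y \<Longrightarrow> \<not> pbw_gt B y x"
  by (auto simp: pbw_gt_def)

lemma pbw_gt_trans: "pbw_gt B x y \<Longrightarrow> pbw_gt B y z \<Longrightarrow> pbw_gt B x z"
  by (auto simp: pbw_gt_def)

lemma pbw_gt_total: "x \<noteq> y \<Longrightarrow> pbw_gt B x y \<or> pbw_gt B y x"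
  by (auto simp: pbw_gt_def)

fun inversions :: "gb set \<Rightarrow> gb list \<Rightarrow> nat" where
  "inversions B [] = 0"
| "inversions B (x # w) = length (filter (pbw_gt B x) w) + inversions B w"

lemma inversions_swap: "pbw_gt B a b \<Longrightarrow> inversions B (u @ b # a # v) < inversions B (u @ a # b # v)"
  by (induction u) (auto simp: pbw_gt_asym)

fun first_descent :: "gb set \<Rightarrow> gb list \<Rightarrow> (gb list \<times> gb \<times> gb \<times> gb list) option" where
  "first_descent B (a # b # v) = (if pbw_gt B a b then Some ([], a, b, v)
     else map_option (\<lambda>(u, c, d, v'). (a # u, c, d, v')) (first_descent B (b # v)))"
| "first_descent B _ = None"

lemma first_descent_Some:
  "first_descent B w = Some (u, a, b, v) \<Longrightarrow> w = u @ a # b # v \<and> pbw_gt B a b"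
  by (induction B w arbitrary: u rule: first_descent.induct) (auto split: if_splits)

lemma first_descent_leftmost:
  "first_descent B w = Some (u, p, q, r) \<Longrightarrow> w = u' @ c # d # v' \<Longrightarrow> pbw_gt B c d
   \<Longrightarrow> length u \<le> length u'"
proof (induction B w arbitrary: u u' rule: first_descent.induct)
  case (1 B a b v)
  show ?case
  proof (cases "pbw_gt B a b")
    case True
    with "1.prems"(1) show ?thesis by simp
  next
    case False
    then obtain u0 where u0: "first_descent B (b # v) = Some (u0, p, q, r)" "u = a # u0"
      using "1.prems"(1) by (auto split: prod.splits)
    show ?thesis
    proof (cases u')
      case Nil
      with "1.prems" False show ?thesis by auto
    next
      case (Cons x u1)
      with "1.prems"(2) have "b # v = u1 @ c # d # v'" by simp
      from "1.IH"[OF False u0(1) this "1.prems"(3)] show ?thesis using u0 Cons by simp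
    qed
  qed
qed auto

lemma first_descent_None: "first_descent B w = None \<Longrightarrow> w = u @ c # d # r \<Longrightarrow> \<not> pbw_gt B c d"
proof (induction B w arbitrary: u rule: first_descent.induct)
  case (1 B a b v)
  have ng: "\<not> pbw_gt B a b" and fn: "first_descent B (b # v) = None"
    using "1.prems"(1) by (auto split: if_splits)
  show ?case
  proof (cases u)
    case Nil
    with "1.prems"(2) ng show ?thesis by simp
  next
    case (Cons x u1)
    with "1.prems"(2) have "b # v = u1 @ c # d # r" by simp
    with "1.IH"[OF ng fn] show ?thesis by blast
  qed
qed (auto simp: Cons_eq_append_conv)

text \<open>The result is a combination of sorted words avoiding \<open>B\<close> (see \<open>nf_support\<close>), the PBW
  monomials of the module induced from \<open>\<phi>\<close>.\<close>
function nf :: "gb set \<Rightarrow> (gb \<Rightarrow> complex) \<Rightarrow> gb list \<Rightarrow> tens" where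
  "nf B \<phi> w = (case first_descent B w of
      Some (u, a, b, v) \<Rightarrow>
        (\<lambda>t. nf B \<phi> (u @ b # a # v) t + (\<Sum>z\<in>br_supp a b. br a b z * nf B \<phi> (u @ z # v) t))
    | None \<Rightarrow> (if w \<noteq> [] \<and> last w \<in> B then (\<lambda>t. \<phi> (last w) * nf B \<phi> (butlast w) t) else mono w))"
  by pat_completeness auto
termination
  by (relation "measures [\<lambda>(B, \<phi>, w). length w, \<lambda>(B, \<phi>, w). inversions B w]")
     (auto dest!: first_descent_Some simp: inversions_swap)

declare nf.simps [simp del]

lemma nf_descent:
  "first_descent B w = Some (u, a, b, v) \<Longrightarrow>
   nf B \<phi> w t = nf B \<phi> (u @ b # a # v) t + (\<Sum>z\<in>br_supp a b. br a b z * nf B \<phi> (u @ z # v) t)"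
  by (subst nf.simps) simp

lemma nf_last_in_B:
  "first_descent B w = None \<Longrightarrow> w \<noteq> [] \<Longrightarrow> last w \<in> B \<Longrightarrow>
   nf B \<phi> w t = \<phi> (last w) * nf B \<phi> (butlast w) t"
  by (subst nf.simps) simp

lemma nf_irreducible:
  "first_descent B w = None \<Longrightarrow> \<not> (w \<noteq> [] \<and> last w \<in> B) \<Longrightarrow> nf B \<phi> w = mono w"
  by (subst nf.simps) auto

definition normal_word :: "gb set \<Rightarrow> gb list \<Rightarrow> bool" where
  "normal_word B s \<longleftrightarrow> sorted s \<and> (\<forall>x\<in>set s. x \<notin> B)"

lemma normal_wordI:
  "(\<And>u c d r. w = u @ c # d # r \<Longrightarrow> \<not> pbw_gt B c d) \<Longrightarrow> (w = [] \<or> last w \<notin> B) \<Longrightarrow> normal_word B w"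
proof (induction w)
  case Nil
  then show ?case by (simp add: normal_word_def)
next
  case (Cons x w)
  show ?case
  proof (cases w)
    case Nil
    with Cons.prems show ?thesis by (simp add: normal_word_def)
  next
    case (Cons y w')
    have nw: "normal_word B w"
    proof (rule Cons.IH)
      show "\<not> pbw_gt B c d" if "w = u @ c # d # r" for u c d r
        using Cons.prems(1)[of "x # u" c d r] that by simp
      show "w = [] \<or> last w \<notin> B" using Cons.prems(2) Cons by simp
    qed
    have "\<not> pbw_gt B x y" using Cons.prems(1)[of "[]" x y w'] Cons by simp
    moreover have "y \<notin> B" and "\<forall>z\<in>set w. y \<le> z" using nw Cons by (auto simp: normal_word_def)
    ultimately show ?thesis using nw by (auto simp: normal_word_def pbw_gt_def)
  qed
qed

lemma normal_word_first_descent: "normal_word B s \<Longrightarrow> first_descent B s = None"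
proof (rule ccontr)
  assume n: "normal_word B s" and "first_descent B s \<noteq> None"
  then obtain u a b v where "first_descent B s = Some (u, a, b, v)" by auto
  from first_descent_Some[OF this] have "s = u @ a # b # v" and "pbw_gt B a b" by auto
  with n show False by (auto simp: normal_word_def pbw_gt_def sorted_append)
qed

lemma nf_normal_word: "normal_word B s \<Longrightarrow> nf B \<phi> s = mono s"
  by (rule nf_irreducible[OF normal_word_first_descent]) (auto simp: normal_word_def)

lemma irreducible_normal_word:
  "first_descent B w = None \<Longrightarrow> \<not> (w \<noteq> [] \<and> last w \<in> B) \<Longrightarrow> normal_word B w"
  using normal_wordI first_descent_None by blast

section \<open>Tensors and the kernel of an induced module\<close>

lemma sum_eq_single:
  "finite A \<Longrightarrow> a \<in> A \<Longrightarrow> (\<And>x. x \<in> A \<Longrightarrow> x \<noteq> a \<Longrightarrow> f x = 0) \<Longrightarrow> sum f A = f a"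
  by (subst sum.remove[of A a]) (auto intro: sum.neutral)

lemma subsp_zero: "subsp S \<Longrightarrow> (\<lambda>w. 0) \<in> S"
  by (simp add: subsp_def)

lemma subsp_add: "subsp S \<Longrightarrow> f \<in> S \<Longrightarrow> g \<in> S \<Longrightarrow> (\<lambda>w. f w + g w) \<in> S"
  by (simp add: subsp_def)

lemma subsp_scale: "subsp S \<Longrightarrow> f \<in> S \<Longrightarrow> (\<lambda>w. c * f w) \<in> S"
  by (simp add: subsp_def)

lemma subsp_diff: "subsp S \<Longrightarrow> f \<in> S \<Longrightarrow> g \<in> S \<Longrightarrow> (\<lambda>w. f w - g w) \<in> S"
  using subsp_add[of S f "\<lambda>w. (- 1) * g w"] subsp_scale[of S g "- 1"] by simp

lemma subsp_lincomb:
  "subsp S \<Longrightarrow> f \<in> S \<Longrightarrow> g \<in> S \<Longrightarrow> (\<lambda>w. c * f w + d * g w) \<in> S"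
  by (intro subsp_add subsp_scale)

lemma subsp_sum:
  assumes "subsp S"
  shows "finite A \<Longrightarrow> (\<And>i. i \<in> A \<Longrightarrow> F i \<in> S) \<Longrightarrow> (\<lambda>w. \<Sum>i\<in>A. F i w) \<in> S"
proof (induction A rule: finite_induct)
  case empty
  then show ?case by (simp add: subsp_zero assms)
next
  case (insert x A)
  then have "(\<lambda>w. F x w + (\<Sum>i\<in>A. F i w)) \<in> S" by (intro subsp_add[OF assms]) auto
  with insert show ?case by simp
qed

lemma subsp_sum_scale:
  "subsp S \<Longrightarrow> finite A \<Longrightarrow> (\<And>i. i \<in> A \<Longrightarrow> F i \<in> S) \<Longrightarrow> (\<lambda>w. \<Sum>i\<in>A. c i * F i w) \<in> S"
  using subsp_sum[of S A "\<lambda>i w. c i * F i w"] subsp_scale by blast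

lemma subsp_lspan: "subsp (lspan A)"
  unfolding lspan_def subsp_def by auto

lemma lspan_superset: "A \<subseteq> lspan A"
  unfolding lspan_def by auto

lemma lspan_least: "subsp S \<Longrightarrow> A \<subseteq> S \<Longrightarrow> lspan A \<subseteq> S"
  unfolding lspan_def by auto

lemma lspan_mono: "A \<subseteq> A' \<Longrightarrow> lspan A \<subseteq> lspan A'"
  using lspan_least[OF subsp_lspan, of A A'] lspan_superset[of A'] by blast

lemma Tfin_finite_support: "f \<in> Tfin \<Longrightarrow> finite {w. f w \<noteq> 0}"
  by (simp add: Tfin_def)

lemma subsp_Tfin: "subsp Tfin"
  unfolding subsp_def Tfin_def
proof (intro conjI ballI allI)
  fix f g :: tens
  assume "f \<in> {f. finite {w. f w \<noteq> 0}}" and "g \<in> {f. finite {w. f w \<noteq> 0}}"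
  moreover have "{w. f w + g w \<noteq> 0} \<subseteq> {w. f w \<noteq> 0} \<union> {w. g w \<noteq> 0}" by auto
  ultimately show "(\<lambda>w. f w + g w) \<in> {f. finite {w. f w \<noteq> 0}}" by (auto intro: finite_subset)
next
  fix c and f :: tens
  assume "f \<in> {f. finite {w. f w \<noteq> 0}}"
  moreover have "{w. c * f w \<noteq> 0} \<subseteq> {w. f w \<noteq> 0}" by auto
  ultimately show "(\<lambda>w. c * f w) \<in> {f. finite {w. f w \<noteq> 0}}" by (auto intro: finite_subset)
qed simp

lemma mono_in_Tfin [simp]: "mono s \<in> Tfin"
proof -
  have "{w. mono s w \<noteq> 0} \<subseteq> {s}" by (auto simp: mono_def)
  then show ?thesis unfolding Tfin_def by (auto intro: finite_subset)
qed

lemma Tfin_mono_expansion: "f \<in> Tfin \<Longrightarrow> f = (\<lambda>w. \<Sum>s\<in>{s. f s \<noteq> 0}. f s * mono s w)"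
proof
  fix w assume f: "f \<in> Tfin"
  show "f w = (\<Sum>s\<in>{s. f s \<noteq> 0}. f s * mono s w)"
  proof (cases "f w = 0")
    case True
    then show ?thesis by (simp add: mono_def sum.neutral)
  next
    case False
    then have "(\<Sum>s\<in>{s. f s \<noteq> 0}. f s * mono s w) = f w * mono w w"
      using f unfolding Tfin_def by (intro sum_eq_single) (auto simp: mono_def)
    then show ?thesis by (simp add: mono_def)
  qed
qed

lemma mono_append_left:
  "mono (u @ s) w = (if take (length u) w = u then mono s (drop (length u) w) else 0)"
  unfolding mono_def by (auto simp: append_eq_conv_conj) (metis append_take_drop_id)

lemma mono_append_right:
  "mono (s @ v) w = (if length v \<le> length w \<and> drop (length w - length v) w = v
     then mono s (take (length w - length v) w) else 0)"
  unfolding mono_def by auto (metis append_take_drop_id)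

lemma tmul_mono_left:
  "tmul (mono u) f = (\<lambda>w. if take (length u) w = u then f (drop (length u) w) else 0)"
proof
  fix w
  have "tmul (mono u) f w = (\<Sum>k\<le>length w. if take k w = u then f (drop k w) else 0)"
    unfolding tmul_def mono_def by (intro sum.cong) auto
  also have "\<dots> = (if take (length u) w = u then f (drop (length u) w) else 0)"
  proof (cases "take (length u) w = u")
    case True
    then have "length u \<le> length w" by (metis length_take min.absorb_iff2 min.commute)
    with True show ?thesis by (subst sum_eq_single[where a = "length u"]) (auto dest: arg_cong[where f = length])
  next
    case False
    then show ?thesis
      by (auto intro!: sum.neutral dest: arg_cong[where f = length] simp: min_def split: if_splits)
  qed
  finally show "tmul (mono u) f w = (if take (length u) w = u then f (drop (length u) w) else 0)" .
qed

lemma tmul_mono_right: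
  "tmul f (mono v) = (\<lambda>w. if length v \<le> length w \<and> drop (length w - length v) w = v
     then f (take (length w - length v) w) else 0)"
proof
  fix w
  have "tmul f (mono v) w = (\<Sum>k\<le>length w. if drop k w = v then f (take k w) else 0)"
    unfolding tmul_def mono_def by (intro sum.cong) auto
  also have "\<dots> = (if length v \<le> length w \<and> drop (length w - length v) w = v
      then f (take (length w - length v) w) else 0)"
  proof (cases "length v \<le> length w \<and> drop (length w - length v) w = v")
    case True
    then show ?thesis
      by (subst sum_eq_single[where a = "length w - length v"]) (auto dest: arg_cong[where f = length])
  next
    case False
    have "drop k w \<noteq> v" if "k \<le> length w" for k
      using False that by auto
    with False show ?thesis by (auto intro!: sum.neutral)
  qed
  finally show "tmul f (mono v) w = (if length v \<le> length w \<and> drop (length w - length v) w = v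
      then f (take (length w - length v) w) else 0)" .
qed

lemma tmul_mono_mono: "tmul (mono u) (mono s) = mono (u @ s)"
  unfolding tmul_mono_left using mono_append_left[of u] by (auto simp: fun_eq_iff)

lemma tmul_letter:
  "tmul (mono [b]) f = (\<lambda>w. case w of [] \<Rightarrow> 0 | c # w' \<Rightarrow> if c = b then f w' else 0)"
  unfolding tmul_mono_left by (auto simp: fun_eq_iff split: list.splits)

lemma tmul_letter_add:
  "tmul (mono [b]) (\<lambda>w. f w + g w) = (\<lambda>w. tmul (mono [b]) f w + tmul (mono [b]) g w)"
  and tmul_letter_diff:
  "tmul (mono [b]) (\<lambda>w. f w - g w) = (\<lambda>w. tmul (mono [b]) f w - tmul (mono [b]) g w)"
  and tmul_letter_scale: "tmul (mono [b]) (\<lambda>w. c * f w) = (\<lambda>w. c * tmul (mono [b]) f w)"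
  and tmul_letter_zero: "tmul (mono [b]) (\<lambda>w. 0) = (\<lambda>w. 0)"
  and tmul_letter_sum:
  "tmul (mono [b]) (\<lambda>w. \<Sum>z\<in>A. k z * F z w) = (\<lambda>w. \<Sum>z\<in>A. k z * tmul (mono [b]) (F z) w)"
  unfolding tmul_letter by (auto simp: fun_eq_iff split: list.splits)

lemma tmul_letter_mono: "tmul (mono [b]) (mono s) = mono (b # s)"
  using tmul_mono_mono[of "[b]" s] by simp

lemma mono_in_left_ideal:
  assumes "\<And>b f. f \<in> S \<Longrightarrow> tmul (mono [b]) f \<in> S" and "mono [] \<in> S"
  shows "mono u \<in> S"
proof (induction u)
  case (Cons b u)
  from assms(1)[OF this] show ?case by (simp add: tmul_letter_mono)
qed (rule assms(2))

lemma subsp_tmul_letter_lspan: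
  assumes "subsp S" and "\<And>g. g \<in> A \<Longrightarrow> tmul (mono [b]) g \<in> S" and "f \<in> lspan A"
  shows "tmul (mono [b]) f \<in> S"
proof -
  have "subsp {f. tmul (mono [b]) f \<in> S}"
    unfolding subsp_def using assms(1)
    by (auto simp: tmul_letter_add tmul_letter_scale tmul_letter_zero subsp_zero subsp_add subsp_scale)
  with assms(2,3) lspan_least show ?thesis by blast
qed

lemma Tfin_tmul_letter:
  assumes "f \<in> Tfin"
  shows "tmul (mono [b]) f \<in> Tfin"
proof -
  have "{w. tmul (mono [b]) f w \<noteq> 0} \<subseteq> (\<lambda>w. b # w) ` {w. f w \<noteq> 0}"
  proof
    fix w assume "w \<in> {w. tmul (mono [b]) f w \<noteq> 0}"
    then show "w \<in> (\<lambda>w. b # w) ` {w. f w \<noteq> 0}"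
      by (cases w) (auto simp: tmul_letter split: if_splits)
  qed
  with assms show ?thesis unfolding Tfin_def by (auto intro: finite_subset)
qed

definition ind_gens :: "gb set \<Rightarrow> (gb \<Rightarrow> complex) \<Rightarrow> tens set" where
  "ind_gens B \<phi> = {tmul (tmul (mono u) (rel x y)) (mono v) | u v x y. True}
      \<union> {tmul (mono u) (\<lambda>w. mono [x] w - \<phi> x * mono [] w) | u x. x \<in> B}"

definition ind_ker :: "gb set \<Rightarrow> (gb \<Rightarrow> complex) \<Rightarrow> tens set" where
  "ind_ker B \<phi> = lspan (ind_gens B \<phi>)"

lemma Wker_eq_ind_ker: "Wker m n \<psi> = ind_ker (Gsub_basis m n) \<psi>"
  by (simp add: Wker_def ind_ker_def ind_gens_def)

lemma subsp_ind_ker: "subsp (ind_ker B \<phi>)"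
  by (simp add: ind_ker_def subsp_lspan)

abbreviation swap_rel :: "gb list \<Rightarrow> gb \<Rightarrow> gb \<Rightarrow> gb list \<Rightarrow> tens" where
  "swap_rel u x y v \<equiv> (\<lambda>w. mono (u @ x # y # v) w - mono (u @ y # x # v) w
     - (\<Sum>z\<in>br_supp x y. br x y z * mono (u @ z # v) w))"

abbreviation char_rel :: "(gb \<Rightarrow> complex) \<Rightarrow> gb list \<Rightarrow> gb \<Rightarrow> tens" where
  "char_rel \<phi> u x \<equiv> (\<lambda>w. mono (u @ [x]) w - \<phi> x * mono u w)"

lemma deg1_br: "deg1 (br x y) = (\<lambda>w. \<Sum>z\<in>br_supp x y. br x y z * mono [z] w)"
proof
  fix w
  show "deg1 (br x y) w = (\<Sum>z\<in>br_supp x y. br x y z * mono [z] w)"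
  proof (cases "\<exists>b. w = [b]")
    case True
    then obtain b where w: "w = [b]" by blast
    show ?thesis
    proof (cases "b \<in> br_supp x y")
      case True
      with w show ?thesis by (subst sum_eq_single[where a = b]) (auto simp: deg1_def mono_def)
    next
      case False
      with w show ?thesis by (subst sum.neutral) (auto simp: deg1_def mono_def br_supp_def)
    qed
  next
    case False
    then have "deg1 (br x y) w = 0" by (cases w rule: list.exhaust; cases "tl w") (auto simp: deg1_def)
    moreover have "(\<Sum>z\<in>br_supp x y. br x y z * mono [z] w) = 0"
      using False by (intro sum.neutral) (auto simp: mono_def)
    ultimately show ?thesis by simp
  qed
qed

lemma tmul_rel: "tmul (tmul (mono u) (rel x y)) (mono v) = swap_rel u x y v"
proof
  fix w :: "gb list"
  have left: "tmul (mono u) (rel x y) = swap_rel u x y []"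
    unfolding tmul_mono_left rel_def deg1_br mono_append_left[of u] by (auto simp: fun_eq_iff)
  define k where "k = length w - length v"
  define c where "c \<longleftrightarrow> length v \<le> length w \<and> drop k w = v"
  have right: "mono (s @ v) w = (if c then mono s (take k w) else 0)" for s
    using mono_append_right[of s v w] by (simp add: c_def k_def)
  have "tmul (tmul (mono u) (rel x y)) (mono v) w = (if c then swap_rel u x y [] (take k w) else 0)"
    by (simp add: tmul_mono_right c_def k_def left)
  then show "tmul (tmul (mono u) (rel x y)) (mono v) w = swap_rel u x y v w"
    using right[of "u @ [x, y]"] right[of "u @ [y, x]"] right[of "u @ [z]" for z] by (cases c) simp_all
qed

lemma tmul_char: "tmul (mono u) (\<lambda>w. mono [x] w - c * mono [] w) = char_rel (\<lambda>_. c) u x"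
  unfolding tmul_mono_left using mono_append_left[of u "[]"] mono_append_left[of u]
  by (auto simp: fun_eq_iff)

lemma ind_gens_cases:
  assumes "g \<in> ind_gens B \<phi>"
  obtains u x y v where "g = swap_rel u x y v"
  | u x where "x \<in> B" and "g = char_rel \<phi> u x"
  using assms unfolding ind_gens_def by (auto simp: tmul_rel tmul_char)

lemma swap_rel_in_Tfin: "swap_rel u x y v \<in> Tfin"
  by (intro subsp_diff[OF subsp_Tfin] subsp_sum_scale[OF subsp_Tfin]) simp_all

lemma char_rel_in_Tfin: "char_rel \<phi> u x \<in> Tfin"
  by (intro subsp_diff[OF subsp_Tfin] subsp_scale[OF subsp_Tfin]) simp_all

lemma ind_ker_Tfin: "ind_ker B \<phi> \<subseteq> Tfin"
  unfolding ind_ker_def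
  by (rule lspan_least[OF subsp_Tfin])
     (auto elim: ind_gens_cases simp: swap_rel_in_Tfin char_rel_in_Tfin)

lemma swap_rel_in_ind_ker: "swap_rel u x y v \<in> ind_ker B \<phi>"
  using lspan_superset[of "ind_gens B \<phi>"] unfolding ind_ker_def ind_gens_def tmul_rel by blast

lemma char_rel_in_ind_ker: "x \<in> B \<Longrightarrow> char_rel \<phi> u x \<in> ind_ker B \<phi>"
  using lspan_superset[of "ind_gens B \<phi>"] unfolding ind_ker_def ind_gens_def by (force simp: tmul_char)

lemma ind_ker_tmul_letter: "f \<in> ind_ker B \<phi> \<Longrightarrow> tmul (mono [b]) f \<in> ind_ker B \<phi>"
  unfolding ind_ker_def
proof (erule subsp_tmul_letter_lspan[OF subsp_lspan, rotated])
  fix g assume "g \<in> ind_gens B \<phi>"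
  then show "tmul (mono [b]) g \<in> lspan (ind_gens B \<phi>)"
  proof (cases rule: ind_gens_cases)
    case (1 u x y v)
    then have "tmul (mono [b]) g = swap_rel (b # u) x y v"
      by (simp add: tmul_letter_diff tmul_letter_sum tmul_letter_mono)
    then show ?thesis using swap_rel_in_ind_ker[of "b # u"] by (simp add: ind_ker_def)
  next
    case (2 u x)
    then have "tmul (mono [b]) g = char_rel \<phi> (b # u) x"
      by (simp add: tmul_letter_diff tmul_letter_scale tmul_letter_mono)
    then show ?thesis using char_rel_in_ind_ker[OF 2(1), where u = "b # u"] by (simp add: ind_ker_def)
  qed
qed

section \<open>Normal forms of tensors\<close>

definition nf_tens :: "gb set \<Rightarrow> (gb \<Rightarrow> complex) \<Rightarrow> tens \<Rightarrow> tens" where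
  "nf_tens B \<phi> f = (\<lambda>t. \<Sum>w\<in>{w. f w \<noteq> 0}. f w * nf B \<phi> w t)"

lemma nf_tens_superset:
  "finite F \<Longrightarrow> {w. f w \<noteq> 0} \<subseteq> F \<Longrightarrow> nf_tens B \<phi> f = (\<lambda>t. \<Sum>w\<in>F. f w * nf B \<phi> w t)"
  unfolding nf_tens_def by (intro ext sum.mono_neutral_left) auto

lemma nf_tens_add:
  assumes f: "f \<in> Tfin" and g: "g \<in> Tfin"
  shows "nf_tens B \<phi> (\<lambda>w. f w + g w) = (\<lambda>t. nf_tens B \<phi> f t + nf_tens B \<phi> g t)"
proof -
  define F where "F = {w. f w \<noteq> 0} \<union> {w. g w \<noteq> 0}"
  have F: "finite F" using f g by (simp add: F_def Tfin_finite_support)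
  have "{w. f w \<noteq> 0} \<subseteq> F" "{w. g w \<noteq> 0} \<subseteq> F" "{w. f w + g w \<noteq> 0} \<subseteq> F"
    by (auto simp: F_def)
  from this[THEN nf_tens_superset[OF F]] show ?thesis
    by (auto simp: distrib_right sum.distrib)
qed

lemma nf_tens_scale:
  assumes f: "f \<in> Tfin"
  shows "nf_tens B \<phi> (\<lambda>w. c * f w) = (\<lambda>t. c * nf_tens B \<phi> f t)"
proof -
  have F: "finite {w. f w \<noteq> 0}" using f by (simp add: Tfin_finite_support)
  have "{w. c * f w \<noteq> 0} \<subseteq> {w. f w \<noteq> 0}" by auto
  from nf_tens_superset[OF F this] show ?thesis
    by (auto simp: nf_tens_def sum_distrib_left mult.assoc)
qed

lemma nf_tens_diff:
  assumes "f \<in> Tfin" and "g \<in> Tfin"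
  shows "nf_tens B \<phi> (\<lambda>w. f w - g w) = (\<lambda>t. nf_tens B \<phi> f t - nf_tens B \<phi> g t)"
proof -
  have "(\<lambda>w. (- 1) * g w) \<in> Tfin" using subsp_scale[OF subsp_Tfin assms(2)] .
  with assms have "nf_tens B \<phi> (\<lambda>w. f w + (- 1) * g w) = (\<lambda>t. nf_tens B \<phi> f t + nf_tens B \<phi> (\<lambda>w. (- 1) * g w) t)"
    by (intro nf_tens_add)
  then show ?thesis using nf_tens_scale[OF assms(2), of B \<phi> "- 1"] by simp
qed

lemma nf_tens_lincomb:
  "f \<in> Tfin \<Longrightarrow> g \<in> Tfin \<Longrightarrow>
   nf_tens B \<phi> (\<lambda>w. c * f w + d * g w) = (\<lambda>t. c * nf_tens B \<phi> f t + d * nf_tens B \<phi> g t)"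
  by (simp add: nf_tens_add nf_tens_scale subsp_scale[OF subsp_Tfin])

lemma nf_tens_zero: "nf_tens B \<phi> (\<lambda>w. 0) = (\<lambda>t. 0)"
  by (simp add: nf_tens_def)

lemma nf_tens_sum:
  "finite A \<Longrightarrow> (\<And>i. i \<in> A \<Longrightarrow> F i \<in> Tfin) \<Longrightarrow>
   nf_tens B \<phi> (\<lambda>w. \<Sum>i\<in>A. F i w) = (\<lambda>t. \<Sum>i\<in>A. nf_tens B \<phi> (F i) t)"
proof (induction A rule: finite_induct)
  case empty
  then show ?case by (simp add: nf_tens_zero)
next
  case (insert x A)
  have "(\<lambda>w. \<Sum>i\<in>A. F i w) \<in> Tfin" using insert by (intro subsp_sum[OF subsp_Tfin]) auto
  with insert show ?case by (simp add: nf_tens_add)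
qed

lemma nf_tens_mono: "nf_tens B \<phi> (mono s) = nf B \<phi> s"
  using nf_tens_superset[of "{s}" "mono s"] by (simp add: mono_def)

lemma nf_tens_tmul_letter:
  assumes "f \<in> Tfin"
  shows "nf_tens B \<phi> (tmul (mono [b]) f) = (\<lambda>t. \<Sum>w\<in>{w. f w \<noteq> 0}. f w * nf B \<phi> (b # w) t)"
proof -
  have "{w. tmul (mono [b]) f w \<noteq> 0} \<subseteq> (\<lambda>w. b # w) ` {w. f w \<noteq> 0}"
  proof
    fix w assume "w \<in> {w. tmul (mono [b]) f w \<noteq> 0}"
    then show "w \<in> (\<lambda>w. b # w) ` {w. f w \<noteq> 0}"
      by (cases w) (auto simp: tmul_letter split: if_splits)
  qed
  with assms have "nf_tens B \<phi> (tmul (mono [b]) f)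
      = (\<lambda>t. \<Sum>w\<in>(\<lambda>w. b # w) ` {w. f w \<noteq> 0}. tmul (mono [b]) f w * nf B \<phi> w t)"
    by (intro nf_tens_superset) (auto simp: Tfin_def)
  also have "\<dots> = (\<lambda>t. \<Sum>w\<in>{w. f w \<noteq> 0}. f w * nf B \<phi> (b # w) t)"
    by (subst sum.reindex) (auto simp: inj_on_def tmul_letter)
  finally show ?thesis .
qed

lemma nf_Tfin_and_congruent: "nf B \<phi> w \<in> Tfin \<and> (\<lambda>t. mono w t - nf B \<phi> w t) \<in> ind_ker B \<phi>"
proof (induction B \<phi> w rule: nf.induct)
  case (1 B \<phi> w)
  show ?case
  proof (cases "first_descent B w")
    case (Some x)
    then obtain u a b v where fd: "first_descent B w = Some (u, a, b, v)" by (cases x) auto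
    have w: "w = u @ a # b # v" using first_descent_Some[OF fd] by simp
    note IH1 = "1.IH"(2)[OF fd refl refl refl] and IH2 = "1.IH"(3)[OF fd refl refl refl]
    have nf_w: "nf B \<phi> w = (\<lambda>t. nf B \<phi> (u @ b # a # v) t + (\<Sum>z\<in>br_supp a b. br a b z * nf B \<phi> (u @ z # v) t))"
      by (rule ext) (rule nf_descent[OF fd])
    have "nf B \<phi> w \<in> Tfin"
      unfolding nf_w using IH1 IH2 by (intro subsp_add[OF subsp_Tfin] subsp_sum_scale[OF subsp_Tfin]) auto
    moreover have "(\<lambda>t. mono w t - nf B \<phi> w t) = (\<lambda>t. swap_rel u a b v t
       + ((mono (u @ b # a # v) t - nf B \<phi> (u @ b # a # v) t)
         + (\<Sum>z\<in>br_supp a b. br a b z * (mono (u @ z # v) t - nf B \<phi> (u @ z # v) t))))"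
      unfolding nf_w using w by (simp add: algebra_simps sum_subtractf)
    moreover have "\<dots> \<in> ind_ker B \<phi>"
      using IH1 IH2
      by (intro subsp_add[OF subsp_ind_ker] subsp_sum_scale[OF subsp_ind_ker] swap_rel_in_ind_ker) auto
    ultimately show ?thesis by simp
  next
    case None
    show ?thesis
    proof (cases "w \<noteq> [] \<and> last w \<in> B")
      case True
      note IH = "1.IH"(1)[OF None True]
      have nf_w: "nf B \<phi> w = (\<lambda>t. \<phi> (last w) * nf B \<phi> (butlast w) t)"
        using nf_last_in_B[OF None] True by auto
      have w: "w = butlast w @ [last w]" using True by simp
      have "nf B \<phi> w \<in> Tfin" unfolding nf_w using IH by (intro subsp_scale[OF subsp_Tfin]) auto
      moreover have "(\<lambda>t. mono w t - nf B \<phi> w t) = (\<lambda>t. char_rel \<phi> (butlast w) (last w) t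
          + \<phi> (last w) * (mono (butlast w) t - nf B \<phi> (butlast w) t))"
        unfolding nf_w by (rule ext) (subst (1) w, simp add: algebra_simps)
      moreover have "\<dots> \<in> ind_ker B \<phi>"
        using True IH
        by (intro subsp_add[OF subsp_ind_ker] subsp_scale[OF subsp_ind_ker] char_rel_in_ind_ker) auto
      ultimately show ?thesis by simp
    next
      case False
      then show ?thesis using nf_irreducible[OF None False] subsp_zero[OF subsp_ind_ker] by simp
    qed
  qed
qed

lemma nf_tens_Tfin_and_congruent:
  assumes "f \<in> Tfin"
  shows "nf_tens B \<phi> f \<in> Tfin \<and> (\<lambda>t. f t - nf_tens B \<phi> f t) \<in> ind_ker B \<phi>"
proof -
  define F where "F = {w. f w \<noteq> 0}"
  have F: "finite F" using assms by (simp add: F_def Tfin_finite_support)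
  have "nf_tens B \<phi> f \<in> Tfin"
    unfolding nf_tens_def F_def[symmetric]
    by (rule subsp_sum_scale[OF subsp_Tfin F conjunct1[OF nf_Tfin_and_congruent]])
  moreover have "(\<lambda>t. f t - nf_tens B \<phi> f t) = (\<lambda>t. \<Sum>w\<in>F. f w * (mono w t - nf B \<phi> w t))"
    unfolding nf_tens_def F_def[symmetric]
    by (subst (1) Tfin_mono_expansion[OF assms]) (simp add: F_def right_diff_distrib sum_subtractf)
  moreover have "\<dots> \<in> ind_ker B \<phi>"
    by (rule subsp_sum_scale[OF subsp_ind_ker F conjunct2[OF nf_Tfin_and_congruent]])
  ultimately show ?thesis by simp
qed

lemma finite_nf_tens_support: "f \<in> Tfin \<Longrightarrow> finite {t. nf_tens B \<phi> f t \<noteq> 0}"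
  using nf_tens_Tfin_and_congruent[of f B \<phi>] by (simp add: Tfin_finite_support)

lemma append_Cons2_cases:
  assumes "u @ a # b # v = u' @ c # d # v'" and "length u \<le> length u'"
  obtains "u' = u" "c = a" "d = b" "v' = v"
  | "u' = u @ [a]" "c = b" "v = d # v'"
  | m where "u' = u @ a # b # m" "v = m @ c # d # v'"
proof -
  from assms obtain us where "u' = u @ us" and "a # b # v = us @ c # d # v'"
    by (auto simp: append_eq_append_conv2 dest: arg_cong[where f = length])
  with that show thesis by (cases us; cases "tl us") auto
qed

section \<open>The diamond lemma\<close>

locale subalg_char =
  fixes B :: "gb set" and \<phi> :: "gb \<Rightarrow> complex"
  assumes br_closed: "x \<in> B \<Longrightarrow> y \<in> B \<Longrightarrow> br x y z \<noteq> 0 \<Longrightarrow> z \<in> B"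
    and char_br: "x \<in> B \<Longrightarrow> y \<in> B \<Longrightarrow> (\<Sum>z\<in>br_supp x y. br x y z * \<phi> z) = 0"
begin

abbreviation N where "N \<equiv> nf B \<phi>"

definition swap_rule :: "gb list \<Rightarrow> bool" where
  "swap_rule w \<longleftrightarrow> (\<forall>u a b v t. w = u @ a # b # v \<longrightarrow> pbw_gt B a b \<longrightarrow>
     N w t = N (u @ b # a # v) t + (\<Sum>z\<in>br_supp a b. br a b z * N (u @ z # v) t))"

definition char_rule :: "gb list \<Rightarrow> bool" where
  "char_rule w \<longleftrightarrow> (\<forall>u y t. w = u @ [y] \<longrightarrow> y \<in> B \<longrightarrow> N w t = \<phi> y * N u t)"

lemma swap_ruleD:
  "swap_rule (u @ a # b # v) \<Longrightarrow> pbw_gt B a b \<Longrightarrow>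
   N (u @ a # b # v) t = N (u @ b # a # v) t + (\<Sum>z\<in>br_supp a b. br a b z * N (u @ z # v) t)"
  unfolding swap_rule_def
  by (erule allE[where x = u], erule allE[where x = a], erule allE[where x = b],
      erule allE[where x = v], erule allE[where x = t]) simp

lemma char_ruleD: "char_rule (u @ [y]) \<Longrightarrow> y \<in> B \<Longrightarrow> N (u @ [y]) t = \<phi> y * N u t"
  unfolding char_rule_def by simp

lemma swap_rule_any_order:
  assumes "swap_rule (u @ a # b # v)" and "swap_rule (u @ b # a # v)"
  shows "N (u @ a # b # v) t = N (u @ b # a # v) t + (\<Sum>z\<in>br_supp a b. br a b z * N (u @ z # v) t)"
proof (cases "a = b")
  case False
  then consider "pbw_gt B a b" | "pbw_gt B b a" using pbw_gt_total by blast
  then show ?thesis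
  proof cases
    case 1
    with assms(1) show ?thesis by (rule swap_ruleD)
  next
    case 2
    with assms(2) have "N (u @ b # a # v) t = N (u @ a # b # v) t + (\<Sum>z\<in>br_supp b a. br b a z * N (u @ z # v) t)"
      by (rule swap_ruleD)
    then show ?thesis unfolding sum_br_supp_antisym[of b a] by simp
  qed
qed simp

text \<open>The diamond lemma: both rules hold for \<open>w\<close> once they hold for all words that are shorter,
  or of the same length with fewer inversions. All ambiguities of the rewriting are resolved
  by the Jacobi identity (overlapping descents), by commuting the two rewrites (disjoint
  descents), and by \<open>\<phi>\<close> being a character of the span of \<open>B\<close> (a descent at the end).\<close>
context
  fixes w :: "gb list"
  assumes IH: "\<And>y. (y, w) \<in> measures [length, inversions B] \<Longrightarrow> swap_rule y \<and> char_rule y"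
begin

lemma swap_shorter:
  "length (u @ a # b # v) < length w \<Longrightarrow>
   N (u @ a # b # v) t = N (u @ b # a # v) t + (\<Sum>z\<in>br_supp a b. br a b z * N (u @ z # v) t)"
  by (intro swap_rule_any_order) (simp_all add: IH)

lemma char_shorter: "length (u @ [y]) < length w \<Longrightarrow> y \<in> B \<Longrightarrow> N (u @ [y]) t = \<phi> y * N u t"
  using IH[of "u @ [y]"] by (auto intro: char_ruleD)

lemma swap_fewer_inversions:
  "length (u @ a # b # v) = length w \<Longrightarrow> inversions B (u @ a # b # v) < inversions B w \<Longrightarrow>
   pbw_gt B a b \<Longrightarrow>
   N (u @ a # b # v) t = N (u @ b # a # v) t + (\<Sum>z\<in>br_supp a b. br a b z * N (u @ z # v) t)"
  using IH[of "u @ a # b # v"] by (auto intro: swap_ruleD)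

lemma char_fewer_inversions:
  "length (u @ [y]) = length w \<Longrightarrow> inversions B (u @ [y]) < inversions B w \<Longrightarrow> y \<in> B \<Longrightarrow>
   N (u @ [y]) t = \<phi> y * N u t"
  using IH[of "u @ [y]"] by (auto intro: char_ruleD)

lemma swap_overlap:
  assumes fd: "first_descent B w = Some (u, a, b, e # r)" and be: "pbw_gt B b e"
  shows "N w t = N (u @ a # e # b # r) t + (\<Sum>z\<in>br_supp b e. br b e z * N (u @ a # z # r) t)"
proof -
  from first_descent_Some[OF fd] have w: "w = u @ a # b # e # r" and ab: "pbw_gt B a b" by auto
  have ae: "pbw_gt B a e" using pbw_gt_trans[OF ab be] .
  have inv1: "inversions B (u @ b # a # e # r) < inversions B w"
    using inversions_swap[OF ab, of u "e # r"] w by simp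
  have inv2: "inversions B (u @ b # e # a # r) < inversions B w"
    using inversions_swap[OF ae, of "u @ [b]" r] inv1 by simp
  have inv3: "inversions B (u @ a # e # b # r) < inversions B w"
    using inversions_swap[OF be, of "u @ [a]" r] w by simp
  have inv4: "inversions B (u @ e # a # b # r) < inversions B w"
    using inversions_swap[OF ae, of u "b # r"] inv3 by simp
  note fewer = swap_fewer_inversions[where t = t] and shorter = swap_shorter[where t = t]
  have e0: "N w t = N (u @ b # a # e # r) t + (\<Sum>z\<in>br_supp a b. br a b z * N (u @ z # e # r) t)"
    using nf_descent[OF fd] .
  have e1: "N (u @ b # a # e # r) t = N (u @ e # b # a # r) t
      + (\<Sum>z\<in>br_supp b e. br b e z * N (u @ z # a # r) t)
      + (\<Sum>z\<in>br_supp a e. br a e z * N (u @ b # z # r) t)"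
    using fewer[of "u @ [b]" a e r] fewer[of u b e "a # r"] inv1 inv2 ae be w by simp
  have e2: "N (u @ a # e # b # r) t = N (u @ e # b # a # r) t
      + (\<Sum>z\<in>br_supp a e. br a e z * N (u @ z # b # r) t)
      + (\<Sum>z\<in>br_supp a b. br a b z * N (u @ e # z # r) t)"
    using fewer[of u a e "b # r"] fewer[of "u @ [e]" a b r] inv3 inv4 ae ab w by simp
  have h1: "(\<Sum>z\<in>br_supp a b. br a b z * N (u @ z # e # r) t)
      = (\<Sum>z\<in>br_supp a b. br a b z * N (u @ e # z # r) t)
      + (\<Sum>z\<in>br_supp a b. br a b z * (\<Sum>s\<in>br_supp z e. br z e s * N (u @ s # r) t))"
    using shorter[of u _ e r] w by (simp add: sum.distrib distrib_left)
  have h2: "(\<Sum>z\<in>br_supp a e. br a e z * N (u @ b # z # r) t)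
      = (\<Sum>z\<in>br_supp a e. br a e z * N (u @ z # b # r) t)
      + (\<Sum>z\<in>br_supp a e. br a e z * (\<Sum>s\<in>br_supp b z. br b z s * N (u @ s # r) t))"
    using shorter[of u b _ r] w by (simp add: sum.distrib distrib_left)
  have h3: "(\<Sum>z\<in>br_supp b e. br b e z * N (u @ z # a # r) t)
      = (\<Sum>z\<in>br_supp b e. br b e z * N (u @ a # z # r) t)
      + (\<Sum>z\<in>br_supp b e. br b e z * (\<Sum>s\<in>br_supp z a. br z a s * N (u @ s # r) t))"
    using shorter[of u _ a r] w by (simp add: sum.distrib distrib_left)
  show ?thesis
    using br_jacobi_sum[of a b e "\<lambda>s. N (u @ s # r) t"] unfolding e0 e1 e2 h1 h2 h3
    by (simp add: algebra_simps)
qed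

lemma swap_disjoint:
  assumes fd: "first_descent B w = Some (u, a, b, m @ c # d # r)" and cd: "pbw_gt B c d"
  shows "N w t = N (u @ a # b # m @ d # c # r) t
    + (\<Sum>y\<in>br_supp c d. br c d y * N (u @ a # b # m @ y # r) t)"
proof -
  from first_descent_Some[OF fd] have w: "w = u @ a # b # m @ c # d # r" and ab: "pbw_gt B a b"
    by auto
  have inv1: "inversions B (u @ b # a # m @ c # d # r) < inversions B w"
    using inversions_swap[OF ab, of u "m @ c # d # r"] w by simp
  have inv2: "inversions B (u @ a # b # m @ d # c # r) < inversions B w"
    using inversions_swap[OF cd, of "u @ a # b # m" r] w by simp
  have e0: "N w t = N (u @ b # a # m @ c # d # r) t
      + (\<Sum>z\<in>br_supp a b. br a b z * N (u @ z # m @ c # d # r) t)"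
    using nf_descent[OF fd] .
  have e1: "N (u @ b # a # m @ c # d # r) t = N (u @ b # a # m @ d # c # r) t
      + (\<Sum>y\<in>br_supp c d. br c d y * N (u @ b # a # m @ y # r) t)"
    using swap_fewer_inversions[of "u @ b # a # m" c d r t] inv1 cd w by simp
  have e2: "N (u @ a # b # m @ d # c # r) t = N (u @ b # a # m @ d # c # r) t
      + (\<Sum>z\<in>br_supp a b. br a b z * N (u @ z # m @ d # c # r) t)"
    using swap_fewer_inversions[of u a b "m @ d # c # r" t] inv2 ab w by simp
  have h1: "N (u @ z # m @ c # d # r) t = N (u @ z # m @ d # c # r) t
      + (\<Sum>y\<in>br_supp c d. br c d y * N (u @ z # m @ y # r) t)" for z
    using swap_shorter[of "u @ z # m" c d r t] w by simp
  have h2: "N (u @ a # b # m @ y # r) t = N (u @ b # a # m @ y # r) t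
      + (\<Sum>z\<in>br_supp a b. br a b z * N (u @ z # m @ y # r) t)" for y
    using swap_shorter[of u a b "m @ y # r" t] w by simp
  have "(\<Sum>z\<in>br_supp a b. br a b z * (\<Sum>y\<in>br_supp c d. br c d y * N (u @ z # m @ y # r) t))
      = (\<Sum>y\<in>br_supp c d. br c d y * (\<Sum>z\<in>br_supp a b. br a b z * N (u @ z # m @ y # r) t))"
    by (simp add: sum_distrib_left algebra_simps sum.swap[of _ "br_supp a b"])
  then show ?thesis
    unfolding e0 e1 e2 h1 h2 sum.distrib distrib_left by (simp add: add_ac)
qed

lemma swap_rule_step: "swap_rule w"
  unfolding swap_rule_def
proof (intro allI impI)
  fix u' c d v' t
  assume w: "w = u' @ c # d # v'" and cd: "pbw_gt B c d"
  show "N w t = N (u' @ d # c # v') t + (\<Sum>z\<in>br_supp c d. br c d z * N (u' @ z # v') t)"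
  proof (cases "first_descent B w")
    case None
    with w cd first_descent_None show ?thesis by blast
  next
    case (Some x)
    then obtain u a b v where fd: "first_descent B w = Some (u, a, b, v)" by (cases x) auto
    from first_descent_Some[OF fd] w have "u @ a # b # v = u' @ c # d # v'" by simp
    then show ?thesis
    proof (cases rule: append_Cons2_cases)
      show "length u \<le> length u'" using first_descent_leftmost[OF fd w cd] .
    next
      assume "u' = u" "c = a" "d = b" "v' = v"
      then show ?thesis using nf_descent[OF fd] by simp
    next
      assume "u' = u @ [a]" "c = b" "v = d # v'"
      then show ?thesis using swap_overlap[of u a b d v' t] fd cd by simp
    next
      fix m assume "u' = u @ a # b # m" "v = m @ c # d # v'"
      then show ?thesis using swap_disjoint[of u a b m c d v' t] fd cd by simp
    qed
  qed
qed

lemma char_rule_step: "char_rule w"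
  unfolding char_rule_def
proof (intro allI impI)
  fix w0 y t
  assume wy: "w = w0 @ [y]" and y: "y \<in> B"
  show "N w t = \<phi> y * N w0 t"
  proof (cases "first_descent B w")
    case None
    with wy y show ?thesis using nf_last_in_B by simp
  next
    case (Some x)
    then obtain u a b v where fd: "first_descent B w = Some (u, a, b, v)" by (cases x) auto
    from first_descent_Some[OF fd] have w: "w = u @ a # b # v" and ab: "pbw_gt B a b" by auto
    show ?thesis
    proof (cases v rule: rev_cases)
      case Nil
      with w wy y have b: "b = y" "b \<in> B" and w0: "w0 = u @ [a]" by auto
      with ab have a: "a \<in> B" by (auto simp: pbw_gt_def)
      have "N (u @ [z]) t = \<phi> z * N u t" if "z \<in> br_supp a b" for z
        using char_shorter[of u z t] br_closed[OF a b(2), of z] that w Nil by (simp add: br_supp_def)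
      then have "(\<Sum>z\<in>br_supp a b. br a b z * N (u @ [z]) t) = (\<Sum>z\<in>br_supp a b. br a b z * \<phi> z) * N u t"
        by (simp add: sum_distrib_right mult.assoc)
      also have "\<dots> = 0" using char_br[OF a b(2)] by simp
      finally have "N w t = N (u @ [b, a]) t"
        using nf_descent[OF fd, of \<phi> t] Nil by simp
      also have "\<dots> = \<phi> a * (\<phi> b * N u t)"
        using char_fewer_inversions[of "u @ [b]" a t] char_shorter[of u b t] inversions_swap[OF ab, of u "[]"]
          a b(2) w Nil by simp
      also have "\<dots> = \<phi> b * N w0 t"
        using char_shorter[of u a t] a w w0 Nil by simp
      finally show ?thesis using b by simp
    next
      case (snoc v0 y')
      with w wy have y': "y' = y" and w0: "w0 = u @ a # b # v0" by auto
      have "N w t = \<phi> y * N (u @ b # a # v0) t + (\<Sum>z\<in>br_supp a b. br a b z * (\<phi> y * N (u @ z # v0) t))"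
        using nf_descent[OF fd, of \<phi> t] snoc y' y
          char_fewer_inversions[of "u @ b # a # v0" y t] inversions_swap[OF ab, of u v]
          char_shorter[of "u @ _ # v0" y t] w by simp
      also have "\<dots> = \<phi> y * N (u @ a # b # v0) t"
        using swap_shorter[of u a b v0 t] w snoc by (simp add: sum_distrib_left distrib_left mult.left_commute)
      finally show ?thesis using w0 by simp
    qed
  qed
qed

end

lemma nf_rules: "swap_rule w \<and> char_rule w"
  by (induction w rule: wf_induct[OF wf_measures[of "[length, inversions B]"]])
     (blast intro: swap_rule_step char_rule_step)

lemma nf_swap:
  "N (u @ a # b # v) t = N (u @ b # a # v) t + (\<Sum>z\<in>br_supp a b. br a b z * N (u @ z # v) t)"
  using nf_rules by (blast intro: swap_rule_any_order)

lemma nf_char: "y \<in> B \<Longrightarrow> N (u @ [y]) t = \<phi> y * N u t"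
  using nf_rules char_ruleD by blast

end

section \<open>Degree in the letters \<open>L\<close> and \<open>H\<close>\<close>

fun is_LH :: "gb \<Rightarrow> bool" where
  "is_LH (L _) = True" | "is_LH (H _) = True" | "is_LH _ = False"

definition lh_count :: "gb list \<Rightarrow> nat" where
  "lh_count w = length (filter is_LH w)"

lemma lh_count_simps [simp]:
  "lh_count [] = 0"
  "lh_count (x # w) = (if is_LH x then Suc (lh_count w) else lh_count w)"
  "lh_count (u @ v) = lh_count u + lh_count v"
  by (auto simp: lh_count_def)

lemma lh_count_update:
  "j < length s \<Longrightarrow>
   lh_count (s[j := z]) + (if is_LH (s ! j) then 1 else 0) = lh_count s + (if is_LH z then 1 else 0)"
  by (subst (2) id_take_nth_drop[of j s]) (simp_all add: upd_conv_take_nth_drop)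

lemma lh_count_remove1_le: "lh_count (remove1 x s) \<le> lh_count s"
  by (induction s) auto

lemma lh_count_remove1: "x \<in> set s \<Longrightarrow> is_LH x \<Longrightarrow> lh_count s = Suc (lh_count (remove1 x s))"
  by (induction s) auto

text \<open>Since \<open>[I, J] = 0\<close>, every nonzero bracket involves \<open>L\<close> or \<open>H\<close>, and its result lies in
  the span of the \<open>L, H\<close> only if both arguments do; so rewriting a descent by its bracket
  strictly lowers the number of letters \<open>L, H\<close>.\<close>
lemma br_is_LH: "br a b z \<noteq> 0 \<Longrightarrow> (is_LH a \<or> is_LH b) \<and> (is_LH z \<longrightarrow> is_LH a \<and> is_LH b)"
  by (cases a; cases b; cases z) (auto split: if_splits)

lemma lh_count_br_supp: "z \<in> br_supp a b \<Longrightarrow> lh_count (u @ z # v) < lh_count (u @ a # b # v)"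
  using br_is_LH[of a b z] by (auto simp: br_supp_def)

lemma nf_support: "nf B \<phi> w t \<noteq> 0 \<Longrightarrow> normal_word B t \<and> lh_count t \<le> lh_count w"
proof (induction B \<phi> w arbitrary: t rule: nf.induct)
  case (1 B \<phi> w)
  show ?case
  proof (cases "first_descent B w")
    case (Some x)
    then obtain u a b v where fd: "first_descent B w = Some (u, a, b, v)" by (cases x) auto
    have w: "w = u @ a # b # v" using first_descent_Some[OF fd] by simp
    have "nf B \<phi> (u @ b # a # v) t \<noteq> 0 \<or> (\<exists>z\<in>br_supp a b. nf B \<phi> (u @ z # v) t \<noteq> 0)"
      using "1.prems" nf_descent[OF fd, of \<phi> t] by (auto intro: ccontr simp: sum.neutral)
    then show ?thesis
    proof
      assume "nf B \<phi> (u @ b # a # v) t \<noteq> 0"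
      moreover have "lh_count (u @ b # a # v) = lh_count w" unfolding w by (simp add: lh_count_def)
      ultimately show ?thesis using "1.IH"(2)[OF fd refl refl refl] by simp
    next
      assume "\<exists>z\<in>br_supp a b. nf B \<phi> (u @ z # v) t \<noteq> 0"
      then obtain z where z: "z \<in> br_supp a b" "nf B \<phi> (u @ z # v) t \<noteq> 0" by blast
      from "1.IH"(3)[OF fd refl refl refl z] lh_count_br_supp[OF z(1), of u v] w show ?thesis by simp
    qed
  next
    case None
    show ?thesis
    proof (cases "w \<noteq> [] \<and> last w \<in> B")
      case True
      then have "nf B \<phi> (butlast w) t \<noteq> 0" using "1.prems" nf_last_in_B[OF None] by auto
      from "1.IH"(1)[OF None True this] have "normal_word B t \<and> lh_count t \<le> lh_count (butlast w)" .
      moreover have "lh_count (butlast w) \<le> lh_count w"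
        using True by (metis append_butlast_last_id le_add1 lh_count_simps(3))
      ultimately show ?thesis by simp
    next
      case False
      then have "t = w" using "1.prems" nf_irreducible[OF None False] by (auto simp: mono_def split: if_splits)
      with irreducible_normal_word[OF None False] show ?thesis by simp
    qed
  qed
qed

lemma nf_tens_support: "nf_tens B \<phi> f t \<noteq> 0 \<Longrightarrow> \<exists>w. f w \<noteq> 0 \<and> nf B \<phi> w t \<noteq> 0"
proof (rule ccontr)
  assume "nf_tens B \<phi> f t \<noteq> 0" and "\<not> (\<exists>w. f w \<noteq> 0 \<and> nf B \<phi> w t \<noteq> 0)"
  then have "\<forall>w\<in>{w. f w \<noteq> 0}. f w * nf B \<phi> w t = 0" by auto
  then have "nf_tens B \<phi> f t = 0" unfolding nf_tens_def by (simp add: sum.neutral)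
  with \<open>nf_tens B \<phi> f t \<noteq> 0\<close> show False by simp
qed

lemma nf_tens_normal_word: "nf_tens B \<phi> f t \<noteq> 0 \<Longrightarrow> normal_word B t"
  using nf_tens_support nf_support by blast

definition char_prod :: "gb set \<Rightarrow> (gb \<Rightarrow> complex) \<Rightarrow> gb list \<Rightarrow> complex" where
  "char_prod B \<phi> w = prod_list (map (\<lambda>x. if x \<in> B then \<phi> x else 1) w)"

lemma sort_filter_swap: "sort (filter P (u @ b # a # v)) = sort (filter P (u @ a # b # v))"
  by (rule properties_for_sort) simp_all

lemma nf_top_degree:
  "lh_count t = lh_count w \<Longrightarrow> (\<forall>x\<in>set w. x \<in> B \<longrightarrow> \<not> is_LH x) \<Longrightarrow>
   nf B \<phi> w t = char_prod B \<phi> w * mono (sort (filter (\<lambda>x. x \<notin> B) w)) t"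
proof (induction B \<phi> w rule: nf.induct)
  case (1 B \<phi> w)
  show ?case
  proof (cases "first_descent B w")
    case (Some x)
    then obtain u a b v where fd: "first_descent B w = Some (u, a, b, v)" by (cases x) auto
    have w: "w = u @ a # b # v" using first_descent_Some[OF fd] by simp
    have "nf B \<phi> (u @ z # v) t = 0" if "z \<in> br_supp a b" for z
      using nf_support[of B \<phi> "u @ z # v" t] lh_count_br_supp[OF that, of u v] "1.prems"(1) w by fastforce
    then have "nf B \<phi> w t = nf B \<phi> (u @ b # a # v) t" using nf_descent[OF fd, of \<phi> t] by simp
    also have "\<dots> = char_prod B \<phi> (u @ b # a # v) * mono (sort (filter (\<lambda>x. x \<notin> B) (u @ b # a # v))) t"
      using "1.IH"(2)[OF fd refl refl refl] "1.prems" w by auto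
    also have "\<dots> = char_prod B \<phi> w * mono (sort (filter (\<lambda>x. x \<notin> B) w)) t"
      unfolding w sort_filter_swap by (simp add: char_prod_def mult_ac)
    finally show ?thesis .
  next
    case None
    show ?thesis
    proof (cases "w \<noteq> [] \<and> last w \<in> B")
      case True
      then obtain w0 y where w: "w = w0 @ [y]" and y: "y \<in> B" by (cases w rule: rev_cases) auto
      with "1.prems" have "\<not> is_LH y" and "lh_count t = lh_count w0" by auto
      with "1.IH"(1)[OF None True] "1.prems"(2) w
      have "nf B \<phi> w0 t = char_prod B \<phi> w0 * mono (sort (filter (\<lambda>x. x \<notin> B) w0)) t" by simp
      with nf_last_in_B[OF None] True w y show ?thesis by (simp add: char_prod_def)
    next
      case False
      have n: "normal_word B w" using irreducible_normal_word[OF None False] .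
      then have "char_prod B \<phi> w = 1" by (induction w) (auto simp: char_prod_def normal_word_def)
      moreover have "filter (\<lambda>x. x \<notin> B) w = w" "sort w = w"
        using n by (auto simp: normal_word_def sorted_sort_id)
      ultimately show ?thesis using nf_irreducible[OF None False] by simp
    qed
  qed
qed

lemma char_prod_update:
  assumes "normal_word B s" and "j < length s" and "z \<in> B"
  shows "char_prod B \<phi> (s[j := z]) = \<phi> z"
proof -
  have one: "prod_list (map (\<lambda>x. if x \<in> B then \<phi> x else 1) xs) = 1" if "set xs \<subseteq> set s" for xs
    using assms(1) that by (induction xs) (auto simp: normal_word_def)
  have "set (take j s) \<subseteq> set s" "set (drop (Suc j) s) \<subseteq> set s"
    by (auto dest: in_set_takeD in_set_dropD)
  with assms(2,3) show ?thesis
    by (simp add: char_prod_def upd_conv_take_nth_drop one)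
qed

lemma sort_filter_update:
  assumes s: "normal_word B s" and j: "j < length s" and z: "z \<in> B"
  shows "sort (filter (\<lambda>x. x \<notin> B) (s[j := z])) = remove1 (s ! j) s"
proof -
  have "filter (\<lambda>x. x \<notin> B) (take j s) = take j s" "filter (\<lambda>x. x \<notin> B) (drop (Suc j) s) = drop (Suc j) s"
    using s by (auto intro!: filter_True simp: normal_word_def dest: in_set_takeD in_set_dropD)
  with j z have "filter (\<lambda>x. x \<notin> B) (s[j := z]) = take j s @ drop (Suc j) s"
    by (simp add: upd_conv_take_nth_drop)
  moreover have "mset (remove1 (s ! j) s) = mset (take j s @ drop (Suc j) s)"
  proof -
    have "mset s = mset (take j s @ drop (Suc j) s) + {#s ! j#}"
      by (subst (1) id_take_nth_drop[OF j]) simp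
    then show ?thesis by simp
  qed
  moreover have "sorted (remove1 (s ! j) s)" using s by (simp add: normal_word_def sorted_remove1)
  ultimately show ?thesis by (metis properties_for_sort)
qed

lemma sum_nth_eq: "(\<Sum>j<length s. if s ! j = x then c else 0) = of_nat (count_list s x) * (c::complex)"
proof (induction s)
  case (Cons a s)
  then show ?case unfolding length_Cons sum.lessThan_Suc_shift by (simp add: algebra_simps)
qed simp

text \<open>Deleting one letter \<open>x\<close> from sorted words is injective, with inverse \<open>insort x\<close>.\<close>
lemma sum_remove1_mono:
  assumes A: "finite A" and A_sorted: "\<And>s. s \<in> A \<Longrightarrow> sorted s"
  shows "(\<Sum>s\<in>A. F s * (of_nat (count_list s x) * mono (remove1 x s) t))
     = (if insort x t \<in> A then F (insort x t) * of_nat (count_list (insort x t) x) else (0::complex))"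
proof -
  have key: "s = insort x t" if "s \<in> A" "count_list s x \<noteq> 0" "remove1 x s = t" for s
  proof -
    have "x \<in> set s" using that(2) by (simp add: count_list_0_iff)
    with insort_remove1[of x s] A_sorted[OF that(1)] that(3) show ?thesis by simp
  qed
  show ?thesis
  proof (cases "insort x t \<in> A")
    case True
    have "(\<Sum>s\<in>A. F s * (of_nat (count_list s x) * mono (remove1 x s) t))
        = F (insort x t) * (of_nat (count_list (insort x t) x) * mono (remove1 x (insort x t)) t)"
      using key by (intro sum_eq_single[OF A True]) (auto simp: mono_def)
    with True show ?thesis by (simp add: mono_def)
  next
    case False
    have "(\<Sum>s\<in>A. F s * (of_nat (count_list s x) * mono (remove1 x s) t)) = 0"
      using key False by (intro sum.neutral) (auto simp: mono_def)
    with False show ?thesis by simp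
  qed
qed

lemma sum_remove1_mono_nonzero:
  assumes "finite A" and "\<And>s. s \<in> A \<Longrightarrow> sorted s" and "s0 \<in> A" "x \<in> set s0" "F s0 \<noteq> 0"
  shows "(\<Sum>s\<in>A. F s * (of_nat (count_list s x) * mono (remove1 x s) (remove1 x s0))) \<noteq> (0::complex)"
proof -
  have "insort x (remove1 x s0) = s0" using insort_remove1[OF assms(4)] assms(2,3) by simp
  with sum_remove1_mono[OF assms(1,2), of F x "remove1 x s0"] assms(3-5) show ?thesis
    by (simp add: count_list_0_iff)
qed

lemma ex_min_index_letter:
  assumes "finite A" and "s1 \<in> A" "x1 \<in> set s1" "Q s1 x1"
  obtains s0 x0 where "s0 \<in> A" "x0 \<in> set s0" "Q s0 x0"
    and "\<And>s x. s \<in> A \<Longrightarrow> x \<in> set s \<Longrightarrow> Q s x \<Longrightarrow> gb_index x0 \<le> gb_index x"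
proof -
  define X where "X = {gb_index x | x s. s \<in> A \<and> x \<in> set s \<and> Q s x}"
  have "X \<subseteq> (\<Union>s\<in>A. gb_index ` set s)" by (auto simp: X_def)
  with assms(1) have fin: "finite X" by (auto intro: finite_subset)
  have "gb_index x1 \<in> X" using assms(2-4) by (auto simp: X_def)
  with fin have "Min X \<in> X" by (auto intro: Min_in)
  then obtain s0 x0 where "s0 \<in> A" "x0 \<in> set s0" "Q s0 x0" "gb_index x0 = Min X"
    by (auto simp: X_def)
  moreover have "Min X \<le> gb_index x" if "s \<in> A" "x \<in> set s" "Q s x" for s x
    using fin that by (auto simp: X_def intro!: Min_le)
  ultimately show thesis using that by metis
qed

text \<open>For a normal word \<open>s\<close> and \<open>y \<in> B\<close>, this is the normal form of \<open>(y - \<phi> y) s\<close>, computed by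
  moving \<open>y\<close> through \<open>s\<close> to the right end.\<close>
definition nf_commutator :: "gb set \<Rightarrow> (gb \<Rightarrow> complex) \<Rightarrow> gb \<Rightarrow> gb list \<Rightarrow> tens" where
  "nf_commutator B \<phi> y s =
     (\<lambda>t. \<Sum>j<length s. \<Sum>z\<in>br_supp y (s ! j). br y (s ! j) z * nf B \<phi> (s[j := z]) t)"

lemma nf_update_letter:
  assumes s: "normal_word B s" and j: "j < length s" and z: "z \<in> B" "\<not> is_LH z"
    and deg: "lh_count t = lh_count (s[j := z]) \<or> lh_count s = 0"
  shows "nf B \<phi> (s[j := z]) t = \<phi> z * mono (remove1 (s ! j) s) t"
proof (cases "lh_count t = lh_count (s[j := z])")
  case True
  have "\<forall>x\<in>set (s[j := z]). x \<in> B \<longrightarrow> \<not> is_LH x"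
    using set_update_subset_insert[of s j z] s z by (auto simp: normal_word_def)
  from nf_top_degree[OF True this] show ?thesis
    unfolding char_prod_update[OF s j z(1)] sort_filter_update[OF s j z(1)] .
next
  case False
  with deg have "lh_count s = 0" by simp
  with False z j have "lh_count (s[j := z]) < lh_count t"
    using lh_count_update[OF j, of z] by (simp split: if_splits)
  then have "nf B \<phi> (s[j := z]) t = 0" using nf_support[of B \<phi> "s[j := z]" t] by auto
  moreover have "t \<noteq> remove1 (s ! j) s"
    using lh_count_remove1_le[of "s ! j" s] \<open>lh_count s = 0\<close> False \<open>lh_count (s[j := z]) < lh_count t\<close>
    by auto
  ultimately show ?thesis by (simp add: mono_def)
qed

lemma nf_commutator_term:
  assumes "normal_word B s" and "j < length s" and "br_supp y (s ! j) \<subseteq> {z}" and "z \<in> B" "\<not> is_LH z"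
    and "lh_count t = lh_count (s[j := z]) \<or> lh_count s = 0"
  shows "(\<Sum>z'\<in>br_supp y (s ! j). br y (s ! j) z' * nf B \<phi> (s[j := z']) t)
    = br y (s ! j) z * \<phi> z * mono (remove1 (s ! j) s) t"
proof -
  have "(\<Sum>z'\<in>br_supp y (s ! j). br y (s ! j) z' * nf B \<phi> (s[j := z']) t)
      = br y (s ! j) z * nf B \<phi> (s[j := z]) t"
    using assms(3) by (cases "z \<in> br_supp y (s ! j)") (auto simp: br_supp_def subset_singleton_iff)
  with nf_update_letter[OF assms(1,2,4,5,6)] show ?thesis by simp
qed

context subalg_char
begin

lemma nf_tens_ind_gens:
  assumes "g \<in> ind_gens B \<phi>"
  shows "nf_tens B \<phi> g = (\<lambda>t. 0)"
  using assms
proof (cases rule: ind_gens_cases)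
  case (1 u x y v)
  have "(\<lambda>w. mono (u @ x # y # v) w - mono (u @ y # x # v) w) \<in> Tfin"
    by (simp add: subsp_diff[OF subsp_Tfin])
  moreover have "(\<lambda>w. \<Sum>z\<in>br_supp x y. br x y z * mono (u @ z # v) w) \<in> Tfin"
    by (simp add: subsp_sum_scale[OF subsp_Tfin])
  ultimately show ?thesis
    using nf_tens_diff[of "\<lambda>w. mono (u @ x # y # v) w - mono (u @ y # x # v) w"
        "\<lambda>w. \<Sum>z\<in>br_supp x y. br x y z * mono (u @ z # v) w" B \<phi>]
      nf_tens_diff[of "mono (u @ x # y # v)" "mono (u @ y # x # v)" B \<phi>]
      nf_tens_sum[of "br_supp x y" "\<lambda>z w. br x y z * mono (u @ z # v) w" B \<phi>]
      nf_tens_scale[OF mono_in_Tfin, of B \<phi>]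
    by (simp add: 1 nf_tens_mono nf_swap[of u x y v] subsp_scale[OF subsp_Tfin])
next
  case (2 u x)
  then show ?thesis
    using nf_tens_diff[of "mono (u @ [x])" "\<lambda>w. \<phi> x * mono u w" B \<phi>]
      nf_tens_scale[OF mono_in_Tfin, of B \<phi> "\<phi> x" u]
    by (simp add: nf_tens_mono nf_char subsp_scale[OF subsp_Tfin])
qed

lemma nf_tens_ind_ker: "f \<in> ind_ker B \<phi> \<Longrightarrow> nf_tens B \<phi> f = (\<lambda>t. 0)"
proof -
  have "subsp {f. f \<in> Tfin \<and> nf_tens B \<phi> f = (\<lambda>t. 0)}"
    unfolding subsp_def using subsp_Tfin
    by (auto simp: nf_tens_add nf_tens_scale nf_tens_zero subsp_add subsp_scale subsp_zero)
  moreover have "ind_gens B \<phi> \<subseteq> {f. f \<in> Tfin \<and> nf_tens B \<phi> f = (\<lambda>t. 0)}"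
    using ind_ker_Tfin lspan_superset nf_tens_ind_gens unfolding ind_ker_def by blast
  ultimately show "f \<in> ind_ker B \<phi> \<Longrightarrow> nf_tens B \<phi> f = (\<lambda>t. 0)"
    unfolding ind_ker_def using lspan_least by blast
qed

lemma vacuum_notin_ind_ker: "mono [] \<notin> ind_ker B \<phi>"
proof
  assume "mono [] \<in> ind_ker B \<phi>"
  then have "N [] = (\<lambda>t. 0)" using nf_tens_ind_ker nf_tens_mono by metis
  moreover have "N [] = mono []" by (rule nf_irreducible) auto
  ultimately show False by (metis mono_def zero_neq_one)
qed

lemma nf_insert_letter:
  "y \<in> B \<Longrightarrow> N (u @ y # s) t = \<phi> y * N (u @ s) t
     + (\<Sum>j<length s. \<Sum>z\<in>br_supp y (s ! j). br y (s ! j) z * N (u @ s[j := z]) t)"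
proof (induction s arbitrary: u)
  case Nil
  then show ?case using nf_char[of y u t] by simp
next
  case (Cons a s)
  have "N (u @ y # a # s) t = N (u @ a # y # s) t + (\<Sum>z\<in>br_supp y a. br y a z * N (u @ z # s) t)"
    by (rule nf_swap)
  also have "N (u @ a # y # s) t = \<phi> y * N (u @ a # s) t
     + (\<Sum>j<length s. \<Sum>z\<in>br_supp y (s ! j). br y (s ! j) z * N (u @ a # s[j := z]) t)"
    using Cons.IH[of "u @ [a]", OF Cons.prems] by simp
  finally show ?case unfolding length_Cons sum.lessThan_Suc_shift by (simp add: add_ac)
qed

lemma nf_tens_shifted_letter:
  assumes f: "f \<in> Tfin" and y: "y \<in> B"
  shows "nf_tens B \<phi> (\<lambda>w. tmul (mono [y]) f w - \<phi> y * f w)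
    = (\<lambda>t. \<Sum>s\<in>{s. nf_tens B \<phi> f s \<noteq> 0}. nf_tens B \<phi> f s * nf_commutator B \<phi> y s t)"
proof
  fix t
  define P where "P = nf_tens B \<phi> f"
  have P: "P \<in> Tfin" and fP: "(\<lambda>t. f t - P t) \<in> ind_ker B \<phi>"
    using nf_tens_Tfin_and_congruent[OF f] by (auto simp: P_def)
  have "tmul (mono [y]) (\<lambda>t. f t - P t) \<in> ind_ker B \<phi>" by (rule ind_ker_tmul_letter[OF fP])
  then have "nf_tens B \<phi> (\<lambda>w. tmul (mono [y]) f w - tmul (mono [y]) P w) = (\<lambda>t. 0)"
    using nf_tens_ind_ker by (simp add: tmul_letter_diff)
  then have yf: "nf_tens B \<phi> (tmul (mono [y]) f) = nf_tens B \<phi> (tmul (mono [y]) P)"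
    unfolding nf_tens_diff[OF Tfin_tmul_letter[OF f] Tfin_tmul_letter[OF P]] by (simp add: fun_eq_iff)
  have "N (y # s) t = \<phi> y * mono s t + nf_commutator B \<phi> y s t" if "P s \<noteq> 0" for s
    using nf_insert_letter[OF y, of "[]" s t] nf_normal_word[OF nf_tens_normal_word] that
    by (simp add: P_def nf_commutator_def)
  then have "nf_tens B \<phi> (tmul (mono [y]) P) t
      = \<phi> y * (\<Sum>s\<in>{s. P s \<noteq> 0}. P s * mono s t) + (\<Sum>s\<in>{s. P s \<noteq> 0}. P s * nf_commutator B \<phi> y s t)"
    by (simp add: nf_tens_tmul_letter[OF P] distrib_left sum.distrib sum_distrib_left mult_ac)
  also have "(\<Sum>s\<in>{s. P s \<noteq> 0}. P s * mono s t) = P t"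
    using Tfin_mono_expansion[OF P] by metis
  finally show "nf_tens B \<phi> (\<lambda>w. tmul (mono [y]) f w - \<phi> y * f w) t
    = (\<Sum>s\<in>{s. nf_tens B \<phi> f s \<noteq> 0}. nf_tens B \<phi> f s * nf_commutator B \<phi> y s t)"
    using yf nf_tens_diff[OF Tfin_tmul_letter[OF f] subsp_scale[OF subsp_Tfin f]] nf_tens_scale[OF f]
    by (simp add: P_def)
qed

end

section \<open>Whittaker functions on \<open>G\<^sup>(\<^sup>m\<^sup>,\<^sup>n\<^sup>)\<close>\<close>

locale whittaker_setting =
  fixes m n :: nat and \<psi> :: "gb \<Rightarrow> complex"
  assumes m_pos: "m > 0" and parity: "even (m + n)" and whittaker: "whittaker_fun m n \<psi>"
begin

abbreviation B0 where "B0 \<equiv> Gsub_basis m n"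

definition p :: int where "p = int m + int n - 1"

lemma mem_B0:
  "x \<in> B0 \<longleftrightarrow> (case x of L k \<Rightarrow> int m \<le> k | H k \<Rightarrow> int m \<le> k | I k \<Rightarrow> int n \<le> k
     | J k \<Rightarrow> int n \<le> k | _ \<Rightarrow> True)"
  by (cases x) (auto simp: Gsub_basis_def)

lemma B0_br_closed: "x \<in> B0 \<Longrightarrow> y \<in> B0 \<Longrightarrow> br x y z \<noteq> 0 \<Longrightarrow> z \<in> B0"
  unfolding mem_B0 by (cases x; cases y; cases z) (auto split: if_splits)

lemma B0_char_br: "x \<in> B0 \<Longrightarrow> y \<in> B0 \<Longrightarrow> (\<Sum>z\<in>br_supp x y. br x y z * \<psi> z) = 0"
  using whittaker unfolding whittaker_fun_def br_supp_def by blast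

sublocale subalg_char B0 \<psi>
  by unfold_locales (auto intro: B0_br_closed B0_char_br)

text \<open>\<open>I\<^sub>k = [H\<^sub>m, I\<^sub>k\<^sub>-\<^sub>m]\<close> and \<open>J\<^sub>k = - [H\<^sub>m, J\<^sub>k\<^sub>-\<^sub>m]\<close> with both factors in \<open>B0\<close> once \<open>k \<ge> m + n\<close>.\<close>
lemma psi_IJ_vanish:
  assumes "X \<in> {I, J}" and "int m + int n \<le> k"
  shows "\<psi> (X k) = 0"
proof -
  have "(\<Sum>z\<in>br_supp (H (int m)) (X (k - int m)). br (H (int m)) (X (k - int m)) z * \<psi> z) = 0"
    using assms by (intro B0_char_br) (auto simp: mem_B0)
  with assms(1) show ?thesis unfolding sum_br_supp_range sum_br_range by auto
qed

lemma two_mult_minus_p_nonzero: "of_int (2 * i - p) \<noteq> (0 :: complex)"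
  using parity unfolding p_def of_int_eq_0_iff by presburger

lemma nf_commutator_lower:
  assumes "\<not> is_LH y" and "lh_count s \<le> lh_count t"
  shows "nf_commutator B0 \<psi> y s t = 0"
  unfolding nf_commutator_def
proof (intro sum.neutral ballI)
  fix j z assume j: "j \<in> {..<length s}" and z: "z \<in> br_supp y (s ! j)"
  from z have "br y (s ! j) z \<noteq> 0" by (simp add: br_supp_def)
  from br_is_LH[OF this] assms(1) have "is_LH (s ! j)" "\<not> is_LH z" by auto
  with lh_count_update[of j s z] j assms(2) have "lh_count (s[j := z]) < lh_count t" by simp
  then show "br y (s ! j) z * N (s[j := z]) t = 0" using nf_support[of B0 \<psi> "s[j := z]" t] by auto
qed

lemma nf_commutator_top:
  assumes X: "X \<in> {I, J}" and s: "normal_word B0 s"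
    and i0: "\<And>x. x \<in> set s \<Longrightarrow> is_LH x \<Longrightarrow> i0 \<le> gb_index x" and deg: "lh_count t + 1 = lh_count s"
  shows "nf_commutator B0 \<psi> (X (p - i0)) s t
    = br (X (p - i0)) (L i0) (X p) * \<psi> (X p) * (of_nat (count_list s (L i0)) * mono (remove1 (L i0) s) t)
    + br (X (p - i0)) (H i0) (X p) * \<psi> (X p) * (of_nat (count_list s (H i0)) * mono (remove1 (H i0) s) t)"
proof -
  define y where "y = X (p - i0)"
  have "(\<Sum>z\<in>br_supp y (s ! j). br y (s ! j) z * N (s[j := z]) t)
      = (if s ! j = L i0 then br y (L i0) (X p) * \<psi> (X p) * mono (remove1 (L i0) s) t else 0)
      + (if s ! j = H i0 then br y (H i0) (X p) * \<psi> (X p) * mono (remove1 (H i0) s) t else 0)"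
    if j: "j < length s" for j
  proof (cases "is_LH (s ! j)")
    case False
    with X have "br_supp y (s ! j) = {}"
      by (cases "s ! j") (auto simp: y_def br_supp_def)
    with False show ?thesis by auto
  next
    case True
    define i where "i = gb_index (s ! j)"
    have i: "i0 \<le> i" using i0[OF nth_mem[OF j] True] by (simp add: i_def)
    define z where "z = X (p - i0 + i)"
    have z: "z \<in> B0" "\<not> is_LH z" using X i m_pos by (auto simp: z_def mem_B0 p_def)
    have sub: "br_supp y (s ! j) \<subseteq> {z}"
      using X True by (cases "s ! j") (auto simp: y_def z_def i_def br_supp_def add.commute split: if_splits)
    have "lh_count t = lh_count (s[j := z])"
      using lh_count_update[OF j, of z] deg True z(2) by simp
    from nf_commutator_term[OF s j sub z disjI1[OF this]]
    have summand: "(\<Sum>z\<in>br_supp y (s ! j). br y (s ! j) z * N (s[j := z]) t)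
        = br y (s ! j) z * \<psi> z * mono (remove1 (s ! j) s) t" .
    show ?thesis
    proof (cases "i = i0")
      case True
      with \<open>is_LH (s ! j)\<close> show ?thesis
        unfolding summand by (cases "s ! j") (auto simp: z_def i_def)
    next
      case False
      with i have "\<psi> z = 0" using X by (auto simp: z_def p_def intro!: psi_IJ_vanish)
      with False show ?thesis unfolding summand by (auto simp: i_def)
    qed
  qed
  then have "nf_commutator B0 \<psi> y s t = (\<Sum>j<length s.
      (if s ! j = L i0 then br y (L i0) (X p) * \<psi> (X p) * mono (remove1 (L i0) s) t else 0)
      + (if s ! j = H i0 then br y (H i0) (X p) * \<psi> (X p) * mono (remove1 (H i0) s) t else 0))"
    unfolding nf_commutator_def by (intro sum.cong) auto
  then show ?thesis by (simp only: y_def sum.distrib sum_nth_eq mult_ac)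
qed

lemma nf_commutator_bottom:
  assumes Y: "Y \<in> {H, L}" and s: "normal_word B0 s" and deg: "lh_count s = 0"
    and j0: "\<And>x. x \<in> set s \<Longrightarrow> j0 \<le> gb_index x"
  shows "nf_commutator B0 \<psi> (Y (p - j0)) s t
    = br (Y (p - j0)) (I j0) (I p) * \<psi> (I p) * (of_nat (count_list s (I j0)) * mono (remove1 (I j0) s) t)
    + br (Y (p - j0)) (J j0) (J p) * \<psi> (J p) * (of_nat (count_list s (J j0)) * mono (remove1 (J j0) s) t)"
proof -
  define y where "y = Y (p - j0)"
  have "(\<Sum>z\<in>br_supp y (s ! j). br y (s ! j) z * N (s[j := z]) t)
      = (if s ! j = I j0 then br y (I j0) (I p) * \<psi> (I p) * mono (remove1 (I j0) s) t else 0)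
      + (if s ! j = J j0 then br y (J j0) (J p) * \<psi> (J p) * mono (remove1 (J j0) s) t else 0)"
    if j: "j < length s" for j
  proof -
    have "s ! j \<notin> B0" "\<not> is_LH (s ! j)"
      using s deg nth_mem[OF j] by (auto simp: normal_word_def lh_count_def filter_empty_conv)
    then obtain X i where X: "X \<in> {I, J}" and sj: "s ! j = X i"
      by (cases "s ! j") (auto simp: mem_B0)
    have i: "j0 \<le> i" using j0[OF nth_mem[OF j]] sj X by auto
    define z where "z = X (p - j0 + i)"
    have z: "z \<in> B0" "\<not> is_LH z" using X i m_pos by (auto simp: z_def mem_B0 p_def)
    have sub: "br_supp y (s ! j) \<subseteq> {z}"
      using X Y by (auto simp: y_def z_def sj br_supp_def add.commute split: if_splits)
    from nf_commutator_term[OF s j sub z] deg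
    have summand: "(\<Sum>z\<in>br_supp y (s ! j). br y (s ! j) z * N (s[j := z]) t)
        = br y (s ! j) z * \<psi> z * mono (remove1 (s ! j) s) t" by simp
    show ?thesis
    proof (cases "i = j0")
      case True
      with X show ?thesis unfolding summand by (auto simp: z_def sj)
    next
      case False
      with i X have "\<psi> z = 0" by (auto simp: z_def p_def intro!: psi_IJ_vanish)
      with False X show ?thesis unfolding summand by (auto simp: sj)
    qed
  qed
  then have "nf_commutator B0 \<psi> y s t = (\<Sum>j<length s.
      (if s ! j = I j0 then br y (I j0) (I p) * \<psi> (I p) * mono (remove1 (I j0) s) t else 0)
      + (if s ! j = J j0 then br y (J j0) (J p) * \<psi> (J p) * mono (remove1 (J j0) s) t else 0))"
    unfolding nf_commutator_def by (intro sum.cong) auto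
  then show ?thesis by (simp only: y_def sum.distrib sum_nth_eq mult_ac)
qed

lemma top_commutators:
  assumes "normal_word B0 s" and "\<forall>x\<in>set s. is_LH x \<longrightarrow> i0 \<le> gb_index x"
    and "lh_count t + 1 = lh_count s"
  shows "nf_commutator B0 \<psi> (I (p - i0)) s t = \<psi> (I p)
      * (of_int (2 * i0 - p) * (of_nat (count_list s (L i0)) * mono (remove1 (L i0) s) t)
         - of_nat (count_list s (H i0)) * mono (remove1 (H i0) s) t)"
    and "nf_commutator B0 \<psi> (J (p - i0)) s t = \<psi> (J p)
      * (of_int (2 * i0 - p) * (of_nat (count_list s (L i0)) * mono (remove1 (L i0) s) t)
         + of_nat (count_list s (H i0)) * mono (remove1 (H i0) s) t)"
  using nf_commutator_top[of I s i0 t] nf_commutator_top[of J s i0 t] assms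
  by (simp_all add: algebra_simps)

lemma bottom_commutators:
  assumes "normal_word B0 s" and "lh_count s = 0" and "\<forall>x\<in>set s. j0 \<le> gb_index x"
  shows "nf_commutator B0 \<psi> (H (p - j0)) s t
      = \<psi> (I p) * (of_nat (count_list s (I j0)) * mono (remove1 (I j0) s) t)
      - \<psi> (J p) * (of_nat (count_list s (J j0)) * mono (remove1 (J j0) s) t)"
    and "nf_commutator B0 \<psi> (L (p - j0)) s t = of_int (2 * j0 - p)
      * (\<psi> (I p) * (of_nat (count_list s (I j0)) * mono (remove1 (I j0) s) t)
         + \<psi> (J p) * (of_nat (count_list s (J j0)) * mono (remove1 (J j0) s) t))"
  using nf_commutator_bottom[of H s j0 t] nf_commutator_bottom[of L s j0 t] assms
  by (simp_all add: algebra_simps)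

lemma top_combination:
  assumes "normal_word B0 s" and "\<forall>x\<in>set s. is_LH x \<longrightarrow> i0 \<le> gb_index x"
    and "lh_count t + 1 = lh_count s" and "x0 \<in> {L i0, H i0}"
  shows "(if x0 = L i0 then \<psi> (J p) else - \<psi> (J p)) * nf_commutator B0 \<psi> (I (p - i0)) s t
      + \<psi> (I p) * nf_commutator B0 \<psi> (J (p - i0)) s t
    = (if x0 = L i0 then 2 * of_int (2 * i0 - p) else 2) * \<psi> (I p) * \<psi> (J p)
      * (of_nat (count_list s x0) * mono (remove1 x0 s) t)"
  using assms(4) unfolding top_commutators[OF assms(1-3)] by (auto simp: algebra_simps)

lemma bottom_combination:
  assumes "normal_word B0 s" and "lh_count s = 0" and "\<forall>x\<in>set s. j0 \<le> gb_index x"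
    and "x0 \<in> {I j0, J j0}"
  shows "(if x0 = I j0 then of_int (2 * j0 - p) else - of_int (2 * j0 - p)) * nf_commutator B0 \<psi> (H (p - j0)) s t
      + nf_commutator B0 \<psi> (L (p - j0)) s t
    = 2 * of_int (2 * j0 - p) * \<psi> (if x0 = I j0 then I p else J p)
      * (of_nat (count_list s x0) * mono (remove1 x0 s) t)"
  using assms(4) unfolding bottom_commutators[OF assms(1-3)] by (auto simp: algebra_simps)

context
  fixes S :: "tens set"
  assumes S: "subsp S" and Wker_S: "Wker m n \<psi> \<subseteq> S" and S_Tfin: "S \<subseteq> Tfin"
    and S_closed: "\<And>b f. f \<in> S \<Longrightarrow> tmul (mono [b]) f \<in> S"
begin

lemma nf_tens_in_S: "f \<in> S \<Longrightarrow> nf_tens B0 \<psi> f \<in> S"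
  using subsp_diff[OF S, of f "\<lambda>t. f t - nf_tens B0 \<psi> f t"] nf_tens_Tfin_and_congruent[of f B0 \<psi>]
    S_Tfin Wker_S by (auto simp: Wker_eq_ind_ker)

lemma shifted_combination:
  assumes f: "f \<in> S" and y: "y1 \<in> B0" "y2 \<in> B0"
  obtains g where "g \<in> S"
    and "\<And>t. nf_tens B0 \<psi> g t = (\<Sum>s\<in>{s. nf_tens B0 \<psi> f s \<noteq> 0}. nf_tens B0 \<psi> f s
      * (c1 * nf_commutator B0 \<psi> y1 s t + c2 * nf_commutator B0 \<psi> y2 s t))"
proof
  have fT: "f \<in> Tfin" using f S_Tfin by auto
  define g1 where "g1 = (\<lambda>w. tmul (mono [y1]) f w - \<psi> y1 * f w)"
  define g2 where "g2 = (\<lambda>w. tmul (mono [y2]) f w - \<psi> y2 * f w)"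
  have "g1 \<in> S" "g2 \<in> S"
    unfolding g1_def g2_def using f by (auto intro!: subsp_diff[OF S] subsp_scale[OF S] S_closed)
  then show "(\<lambda>w. c1 * g1 w + c2 * g2 w) \<in> S" by (rule subsp_lincomb[OF S])
  fix t
  have "g1 \<in> Tfin" "g2 \<in> Tfin" using \<open>g1 \<in> S\<close> \<open>g2 \<in> S\<close> S_Tfin by auto
  then have "nf_tens B0 \<psi> (\<lambda>w. c1 * g1 w + c2 * g2 w) t
      = c1 * nf_tens B0 \<psi> g1 t + c2 * nf_tens B0 \<psi> g2 t"
    by (simp add: nf_tens_lincomb)
  then show "nf_tens B0 \<psi> (\<lambda>w. c1 * g1 w + c2 * g2 w) t = (\<Sum>s\<in>{s. nf_tens B0 \<psi> f s \<noteq> 0}.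
      nf_tens B0 \<psi> f s * (c1 * nf_commutator B0 \<psi> y1 s t + c2 * nf_commutator B0 \<psi> y2 s t))"
    using nf_tens_shifted_letter[OF fT y(1)] nf_tens_shifted_letter[OF fT y(2)]
    unfolding g1_def g2_def by (simp add: sum_distrib_left sum.distrib algebra_simps)
qed

lemma vacuum_in_S_of_Nil_support:
  assumes f: "f \<in> S" and nz: "nf_tens B0 \<psi> f \<noteq> (\<lambda>t. 0)"
    and supp: "\<And>t. nf_tens B0 \<psi> f t \<noteq> 0 \<Longrightarrow> t = []"
  shows "mono [] \<in> S"
proof -
  define P where "P = nf_tens B0 \<psi> f"
  have P: "P = (\<lambda>t. P [] * mono [] t)"
    using supp by (auto simp: P_def mono_def fun_eq_iff)
  with nz have "P [] \<noteq> 0" by (auto simp: P_def)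
  moreover have "(\<lambda>t. (1 / P []) * P t) \<in> S"
    using nf_tens_in_S[OF f] by (intro subsp_scale[OF S]) (simp add: P_def)
  ultimately show ?thesis by (subst (asm) P) (simp add: fun_eq_iff)
qed

context
  assumes psi_I: "\<psi> (I p) \<noteq> 0" and psi_J: "\<psi> (J p) \<noteq> 0"
begin

lemma delete_letter:
  assumes f: "f \<in> S" and y: "y1 \<in> B0" "y2 \<in> B0" and "\<kappa> \<noteq> 0"
    and s0: "nf_tens B0 \<psi> f s0 \<noteq> 0" "x0 \<in> set s0" "Q s0" and "R (remove1 x0 s0)"
    and comb: "\<And>s t. nf_tens B0 \<psi> f s \<noteq> 0 \<Longrightarrow> R t \<Longrightarrow>
      c1 * nf_commutator B0 \<psi> y1 s t + c2 * nf_commutator B0 \<psi> y2 s t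
      = (if Q s then \<kappa> * (of_nat (count_list s x0) * mono (remove1 x0 s) t) else 0)"
  obtains g where "g \<in> S" and "nf_tens B0 \<psi> g \<noteq> (\<lambda>t. 0)"
    and "\<And>t. nf_tens B0 \<psi> g t = (\<Sum>s\<in>{s. nf_tens B0 \<psi> f s \<noteq> 0}. nf_tens B0 \<psi> f s
      * (c1 * nf_commutator B0 \<psi> y1 s t + c2 * nf_commutator B0 \<psi> y2 s t))"
proof -
  define P where "P = nf_tens B0 \<psi> f"
  define SP where "SP = {s. P s \<noteq> 0}"
  have fin: "finite SP" using finite_nf_tens_support f S_Tfin by (auto simp: SP_def P_def)
  have sorted: "sorted s" if "s \<in> SP" for s
    using nf_tens_normal_word that by (auto simp: SP_def P_def normal_word_def)
  obtain g where g: "g \<in> S" and nf_g: "\<And>t. nf_tens B0 \<psi> g t = (\<Sum>s\<in>SP. P s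
      * (c1 * nf_commutator B0 \<psi> y1 s t + c2 * nf_commutator B0 \<psi> y2 s t))"
    using shifted_combination[OF f y] unfolding SP_def P_def by blast
  have "nf_tens B0 \<psi> g (remove1 x0 s0) = \<kappa> * (\<Sum>s\<in>SP. (if Q s then P s else 0)
      * (of_nat (count_list s x0) * mono (remove1 x0 s) (remove1 x0 s0)))"
    unfolding nf_g sum_distrib_left using comb \<open>R (remove1 x0 s0)\<close>
    by (intro sum.cong refl) (simp add: SP_def P_def)
  moreover have "(\<Sum>s\<in>SP. (if Q s then P s else 0)
      * (of_nat (count_list s x0) * mono (remove1 x0 s) (remove1 x0 s0))) \<noteq> 0"
    using s0 by (intro sum_remove1_mono_nonzero[OF fin sorted]) (auto simp: SP_def P_def)
  ultimately have "nf_tens B0 \<psi> g (remove1 x0 s0) \<noteq> 0" using \<open>\<kappa> \<noteq> 0\<close> by simp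
  with g nf_g show thesis by (intro that) (auto simp: SP_def P_def)
qed

text \<open>Acting by \<open>I\<^bsub>p-i\<^sub>0\<^esub> - \<psi>(I\<^bsub>p-i\<^sub>0\<^esub>)\<close> and \<open>J\<^bsub>p-i\<^sub>0\<^esub> - \<psi>(J\<^bsub>p-i\<^sub>0\<^esub>)\<close>, where \<open>i\<^sub>0\<close> is the least
  index of a letter \<open>L, H\<close> in the words of top degree, deletes one such letter with index \<open>i\<^sub>0\<close>.\<close>
lemma lower_lh_degree:
  assumes f: "f \<in> S" and nz: "nf_tens B0 \<psi> f \<noteq> (\<lambda>t. 0)"
    and deg: "\<And>t. nf_tens B0 \<psi> f t \<noteq> 0 \<Longrightarrow> lh_count t \<le> Suc d"
  obtains g where "g \<in> S" and "nf_tens B0 \<psi> g \<noteq> (\<lambda>t. 0)"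
    and "\<And>t. nf_tens B0 \<psi> g t \<noteq> 0 \<Longrightarrow> lh_count t \<le> d"
proof (cases "\<exists>s. nf_tens B0 \<psi> f s \<noteq> 0 \<and> lh_count s = Suc d")
  case False
  with deg have "\<And>t. nf_tens B0 \<psi> f t \<noteq> 0 \<Longrightarrow> lh_count t \<le> d" by (metis le_SucE)
  with f nz show thesis by (rule that)
next
  case True
  define SP where "SP = {s. nf_tens B0 \<psi> f s \<noteq> 0}"
  have fin: "finite SP" using finite_nf_tens_support f S_Tfin by (auto simp: SP_def)
  have normal: "normal_word B0 s" if "s \<in> SP" for s using nf_tens_normal_word that by (auto simp: SP_def)
  from True obtain s1 where s1: "s1 \<in> SP" "lh_count s1 = Suc d" by (auto simp: SP_def)
  then obtain x1 where x1: "x1 \<in> set s1" "is_LH x1"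
    by (metis filter_empty_conv length_0_conv lh_count_def nat.distinct(1))
  obtain s0 x0 where s0: "s0 \<in> SP" "x0 \<in> set s0" and top: "lh_count s0 = Suc d \<and> is_LH x0"
    and min: "\<And>s x. s \<in> SP \<Longrightarrow> x \<in> set s \<Longrightarrow> lh_count s = Suc d \<and> is_LH x \<Longrightarrow> gb_index x0 \<le> gb_index x"
    by (rule ex_min_index_letter[OF fin s1(1) x1(1), where Q = "\<lambda>s x. lh_count s = Suc d \<and> is_LH x"])
       (use s1(2) x1(2) in auto)
  define i0 where "i0 = gb_index x0"
  have x0: "x0 \<in> {L i0, H i0}" using top by (cases x0) (auto simp: i0_def)
  have "x0 \<notin> B0" using normal[OF s0(1)] s0(2) by (auto simp: normal_word_def)
  with x0 have y: "I (p - i0) \<in> B0" "J (p - i0) \<in> B0" by (auto simp: mem_B0 p_def)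
  from two_mult_minus_p_nonzero[of i0] psi_I psi_J have \<kappa>: "(if x0 = L i0 then 2 * of_int (2 * i0 - p) else 2) * \<psi> (I p) * \<psi> (J p) \<noteq> 0"
    by simp
  have comb: "(if x0 = L i0 then \<psi> (J p) else - \<psi> (J p)) * nf_commutator B0 \<psi> (I (p - i0)) s t
        + \<psi> (I p) * nf_commutator B0 \<psi> (J (p - i0)) s t
      = (if lh_count s = Suc d then (if x0 = L i0 then 2 * of_int (2 * i0 - p) else 2) * \<psi> (I p) * \<psi> (J p)
          * (of_nat (count_list s x0) * mono (remove1 x0 s) t) else 0)"
    if s: "nf_tens B0 \<psi> f s \<noteq> 0" and t: "lh_count t = d" for s t
  proof (cases "lh_count s = Suc d")
    case True
    have "\<forall>x\<in>set s. is_LH x \<longrightarrow> i0 \<le> gb_index x" using min[of s] s True by (simp add: i0_def SP_def)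
    with top_combination[OF normal _ _ x0] s True t show ?thesis by (simp add: SP_def)
  next
    case False
    with deg[OF s] t show ?thesis by (simp add: nf_commutator_lower)
  qed
  have "nf_tens B0 \<psi> f s0 \<noteq> 0" "lh_count (remove1 x0 s0) = d"
    using s0(1) lh_count_remove1[OF s0(2)] top by (simp_all add: SP_def)
  then obtain g where "g \<in> S" and nz_g: "nf_tens B0 \<psi> g \<noteq> (\<lambda>t. 0)"
    and nf_g: "\<And>t. nf_tens B0 \<psi> g t = (\<Sum>s\<in>SP. nf_tens B0 \<psi> f s
      * ((if x0 = L i0 then \<psi> (J p) else - \<psi> (J p)) * nf_commutator B0 \<psi> (I (p - i0)) s t
         + \<psi> (I p) * nf_commutator B0 \<psi> (J (p - i0)) s t))"
    using delete_letter[where Q = "\<lambda>s. lh_count s = Suc d" and R = "\<lambda>t. lh_count t = d",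
        OF f y \<kappa> _ s0(2) _ _ comb] top unfolding SP_def by blast
  show thesis
  proof (rule that[OF \<open>g \<in> S\<close> nz_g])
    fix t assume "nf_tens B0 \<psi> g t \<noteq> 0"
    moreover have "nf_tens B0 \<psi> g t = 0" if "Suc d \<le> lh_count t"
      using deg that unfolding nf_g by (intro sum.neutral) (fastforce simp: SP_def nf_commutator_lower)
    ultimately show "lh_count t \<le> d" by linarith
  qed
qed

text \<open>In \<open>L, H\<close>-degree zero the words consist of letters \<open>I, J\<close>; acting by \<open>H\<^bsub>p-j\<^sub>0\<^esub>\<close> and
  \<open>L\<^bsub>p-j\<^sub>0\<^esub>\<close> (shifted by \<open>\<psi>\<close>), where \<open>j\<^sub>0\<close> is the least index of a letter, deletes one
  letter of index \<open>j\<^sub>0\<close>.\<close>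
lemma shorten_words:
  assumes f: "f \<in> S" and supp: "\<And>t. nf_tens B0 \<psi> f t \<noteq> 0 \<Longrightarrow> lh_count t = 0 \<and> length t \<le> Suc e"
    and s1: "nf_tens B0 \<psi> f s1 \<noteq> 0" "s1 \<noteq> []"
  obtains g where "g \<in> S" and "nf_tens B0 \<psi> g \<noteq> (\<lambda>t. 0)"
    and "\<And>t. nf_tens B0 \<psi> g t \<noteq> 0 \<Longrightarrow> lh_count t = 0 \<and> length t \<le> e"
proof -
  define SP where "SP = {s. nf_tens B0 \<psi> f s \<noteq> 0}"
  have fin: "finite SP" using finite_nf_tens_support f S_Tfin by (auto simp: SP_def)
  have normal: "normal_word B0 s" if "s \<in> SP" for s using nf_tens_normal_word that by (auto simp: SP_def)
  have s1_SP: "s1 \<in> SP" using s1(1) by (simp add: SP_def)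
  obtain s0 x0 where s0: "s0 \<in> SP" "x0 \<in> set s0"
    and min: "\<And>s x. s \<in> SP \<Longrightarrow> x \<in> set s \<Longrightarrow> gb_index x0 \<le> gb_index x"
    by (rule ex_min_index_letter[OF fin s1_SP hd_in_set[OF s1(2)], where Q = "\<lambda>_ _. True"]) auto
  define j0 where "j0 = gb_index x0"
  have "x0 \<notin> B0" "\<not> is_LH x0"
    using normal[OF s0(1)] s0 supp[of s0] by (auto simp: normal_word_def SP_def lh_count_def filter_empty_conv)
  then have x0: "x0 \<in> {I j0, J j0}" and "j0 < int n" by (cases x0; simp add: j0_def mem_B0)+
  then have y: "H (p - j0) \<in> B0" "L (p - j0) \<in> B0" by (auto simp: mem_B0 p_def)
  define c where "c = (of_int (2 * j0 - p) :: complex)"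
  from two_mult_minus_p_nonzero[of j0] psi_I psi_J have \<kappa>: "2 * c * \<psi> (if x0 = I j0 then I p else J p) \<noteq> 0"
    by (simp add: c_def)
  have comb: "(if x0 = I j0 then c else - c) * nf_commutator B0 \<psi> (H (p - j0)) s t
        + 1 * nf_commutator B0 \<psi> (L (p - j0)) s t
      = (if True then 2 * c * \<psi> (if x0 = I j0 then I p else J p)
          * (of_nat (count_list s x0) * mono (remove1 x0 s) t) else 0)"
    if s: "nf_tens B0 \<psi> f s \<noteq> 0" for s t
  proof -
    from s have s': "s \<in> SP" by (simp add: SP_def)
    have lh0: "lh_count s = 0" using supp[OF s] by simp
    have "\<forall>x\<in>set s. j0 \<le> gb_index x" using min[OF s'] by (simp add: j0_def)
    from bottom_combination[OF normal[OF s'] lh0 this x0, of t] show ?thesis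
      unfolding c_def mult_1_left if_True .
  qed
  obtain g where "g \<in> S" and nz_g: "nf_tens B0 \<psi> g \<noteq> (\<lambda>t. 0)"
    and nf_g: "\<And>t. nf_tens B0 \<psi> g t = (\<Sum>s\<in>SP. nf_tens B0 \<psi> f s
      * ((if x0 = I j0 then c else - c) * nf_commutator B0 \<psi> (H (p - j0)) s t
         + 1 * nf_commutator B0 \<psi> (L (p - j0)) s t))"
    using delete_letter[where Q = "\<lambda>_. True" and R = "\<lambda>_. True", OF f y \<kappa> _ s0(2) _ _ comb] s0(1)
    unfolding SP_def by blast
  show thesis
  proof (rule that[OF \<open>g \<in> S\<close> nz_g])
    fix t assume nz: "nf_tens B0 \<psi> g t \<noteq> 0"
    have "nf_tens B0 \<psi> g t = (\<Sum>s\<in>SP. nf_tens B0 \<psi> f s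
        * (2 * c * \<psi> (if x0 = I j0 then I p else J p) * (of_nat (count_list s x0) * mono (remove1 x0 s) t)))"
      unfolding nf_g by (intro sum.cong refl, subst comb) (auto simp: SP_def)
    with nz obtain s where s: "s \<in> SP"
      and "nf_tens B0 \<psi> f s * (2 * c * \<psi> (if x0 = I j0 then I p else J p)
        * (of_nat (count_list s x0) * mono (remove1 x0 s) t)) \<noteq> 0"
      by (auto elim: sum.not_neutral_contains_not_neutral)
    then have "x0 \<in> set s" "t = remove1 x0 s" by (auto simp: mono_def count_list_0_iff split: if_splits)
    with supp[of s] lh_count_remove1_le[of x0 s] s show "lh_count t = 0 \<and> length t \<le> e"
      by (auto simp: SP_def length_remove1)
  qed
qed

lemma vacuum_in_S_of_degree_zero:
  "f \<in> S \<Longrightarrow> nf_tens B0 \<psi> f \<noteq> (\<lambda>t. 0) \<Longrightarrow> (\<And>t. nf_tens B0 \<psi> f t \<noteq> 0 \<Longrightarrow> lh_count t = 0 \<and> length t \<le> e)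
   \<Longrightarrow> mono [] \<in> S"
proof (induction e arbitrary: f)
  case 0
  then show ?case by (intro vacuum_in_S_of_Nil_support) auto
next
  case (Suc e)
  show ?case
  proof (cases "\<exists>s. nf_tens B0 \<psi> f s \<noteq> 0 \<and> s \<noteq> []")
    case True
    then obtain s1 where "nf_tens B0 \<psi> f s1 \<noteq> 0" "s1 \<noteq> []" by blast
    with Suc.prems(1,3) show ?thesis
    proof (rule shorten_words)
      fix g assume "g \<in> S" "nf_tens B0 \<psi> g \<noteq> (\<lambda>t. 0)"
        "\<And>t. nf_tens B0 \<psi> g t \<noteq> 0 \<Longrightarrow> lh_count t = 0 \<and> length t \<le> e"
      then show "mono [] \<in> S" by (rule Suc.IH)
    qed
  next
    case False
    with Suc.prems(1,2) show ?thesis by (intro vacuum_in_S_of_Nil_support) auto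
  qed
qed

lemma vacuum_in_S_of_degree:
  "f \<in> S \<Longrightarrow> nf_tens B0 \<psi> f \<noteq> (\<lambda>t. 0) \<Longrightarrow> (\<And>t. nf_tens B0 \<psi> f t \<noteq> 0 \<Longrightarrow> lh_count t \<le> d)
   \<Longrightarrow> mono [] \<in> S"
proof (induction d arbitrary: f)
  case 0
  have "finite {t. nf_tens B0 \<psi> f t \<noteq> 0}" using finite_nf_tens_support "0.prems"(1) S_Tfin by auto
  then have "\<And>t. nf_tens B0 \<psi> f t \<noteq> 0 \<Longrightarrow> lh_count t = 0 \<and> length t \<le> Max (length ` {t. nf_tens B0 \<psi> f t \<noteq> 0})"
    using "0.prems"(3) by auto
  with "0.prems"(1,2) show ?case by (rule vacuum_in_S_of_degree_zero)
next
  case (Suc d)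
  show ?case
  proof (rule lower_lh_degree[OF Suc.prems])
    fix g assume "g \<in> S" "nf_tens B0 \<psi> g \<noteq> (\<lambda>t. 0)" "\<And>t. nf_tens B0 \<psi> g t \<noteq> 0 \<Longrightarrow> lh_count t \<le> d"
    then show "mono [] \<in> S" by (rule Suc.IH)
  qed
qed

lemma vacuum_in_S:
  assumes "f \<in> S" and "nf_tens B0 \<psi> f \<noteq> (\<lambda>t. 0)"
  shows "mono [] \<in> S"
proof -
  have "finite {t. nf_tens B0 \<psi> f t \<noteq> 0}" using finite_nf_tens_support assms(1) S_Tfin by auto
  then have "\<And>t. nf_tens B0 \<psi> f t \<noteq> 0 \<Longrightarrow> lh_count t \<le> Max (lh_count ` {t. nf_tens B0 \<psi> f t \<noteq> 0})"
    by auto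
  with assms show ?thesis by (rule vacuum_in_S_of_degree)
qed

end

end

lemma irreducible_if:
  assumes "\<psi> (I p) \<noteq> 0" and "\<psi> (J p) \<noteq> 0"
  shows "whittaker_module_irreducible m n \<psi>"
  unfolding whittaker_module_irreducible_def
proof (intro conjI allI impI)
  show "Wker m n \<psi> \<noteq> Tfin"
    using vacuum_notin_ind_ker mono_in_Tfin[of "[]"] by (auto simp: Wker_eq_ind_ker)
next
  fix S
  assume "subsp S \<and> Wker m n \<psi> \<subseteq> S \<and> S \<subseteq> Tfin \<and> (\<forall>b. \<forall>f\<in>S. tmul (mono [b]) f \<in> S)"
  then have S: "subsp S" "Wker m n \<psi> \<subseteq> S" "S \<subseteq> Tfin" "\<And>b f. f \<in> S \<Longrightarrow> tmul (mono [b]) f \<in> S"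
    by auto
  show "S = Wker m n \<psi> \<or> S = Tfin"
  proof (cases "S = Wker m n \<psi>")
    case False
    with S(2) obtain f where f: "f \<in> S" "f \<notin> Wker m n \<psi>" by auto
    have nz: "nf_tens B0 \<psi> f \<noteq> (\<lambda>t. 0)"
    proof
      assume "nf_tens B0 \<psi> f = (\<lambda>t. 0)"
      with nf_tens_Tfin_and_congruent[of f B0 \<psi>] f(1) S(3) have "f \<in> ind_ker B0 \<psi>" by auto
      with f(2) show False by (simp add: Wker_eq_ind_ker)
    qed
    have "mono [] \<in> S" by (rule vacuum_in_S[OF S(1-3) _ assms f(1) nz]) (fact S(4))
    then have "mono u \<in> S" for u by (rule mono_in_left_ideal[rotated]) (fact S(4))
    have "g \<in> S" if "g \<in> Tfin" for g
    proof -
      have "(\<lambda>w. \<Sum>s\<in>{s. g s \<noteq> 0}. g s * mono s w) \<in> S"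
        using that \<open>\<And>u. mono u \<in> S\<close>
        by (intro subsp_sum_scale[OF S(1)]) (auto simp: Tfin_def)
      then show ?thesis using Tfin_mono_expansion[OF that] by simp
    qed
    with S(3) show ?thesis by auto
  qed simp
qed

lemma br_supp_extension_letter:
  assumes X: "X \<in> {I, J}" and vanish: "\<psi> (X p) = 0"
    and z: "z \<in> B0" and w: "w \<in> br_supp (X (int n - 1)) z"
  shows "w \<in> B0 - {X (int n - 1)}" and "\<psi> w = 0"
proof -
  have "br_supp (X (int n - 1)) z \<subseteq> {X (gb_index z + (int n - 1))}"
    using X by (cases z) (auto simp: br_supp_def split: if_splits)
  with w have w_eq: "w = X (gb_index z + (int n - 1))" by auto
  have "is_LH z" using w br_is_LH[of "X (int n - 1)" z] X by (auto simp: br_supp_def)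
  with z have "p \<le> gb_index z + (int n - 1)" by (cases z) (auto simp: mem_B0 p_def)
  then show "w \<in> B0 - {X (int n - 1)}" using X m_pos w_eq by (auto simp: mem_B0 p_def)
  show "\<psi> w = 0"
    using vanish psi_IJ_vanish[OF X] \<open>p \<le> gb_index z + (int n - 1)\<close> w_eq
    by (cases "gb_index z + (int n - 1) = p") (auto simp: p_def add_diff_eq)
qed

text \<open>If \<open>\<psi>(X\<^sub>p) = 0\<close> then \<open>\<psi>\<close> vanishes on \<open>X\<^sub>k\<close> for all \<open>k \<ge> p\<close>, which contains all brackets of
  \<open>X\<^bsub>n-1\<^esub>\<close> with \<open>B0\<close>; so \<open>\<psi>\<close> extends to a character on \<open>B0\<close> and \<open>X\<^bsub>n-1\<^esub>\<close>, with an arbitrary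
  value on \<open>X\<^bsub>n-1\<^esub>\<close>.\<close>
lemma subalg_char_extension:
  assumes X: "X \<in> {I, J}" and vanish: "\<psi> (X p) = 0"
  shows "subalg_char (insert (X (int n - 1)) B0) (\<psi>(X (int n - 1) := c))"
proof -
  define x where "x = X (int n - 1)"
  have x: "x \<notin> B0" using X by (auto simp: x_def mem_B0)
  note extension = br_supp_extension_letter[OF X vanish, folded x_def]
  have closed_x: "w \<in> B0" if "z \<in> B0" "br x z w \<noteq> 0" for z w
    using extension(1)[OF that(1)] that(2) by (auto simp: br_supp_def)
  have char_x: "(\<Sum>w\<in>br_supp x z. br x z w * (\<psi>(x := c)) w) = 0" if "z \<in> B0" for z
    using extension[OF that] by (intro sum.neutral) auto
  show ?thesis
    unfolding x_def[symmetric]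
  proof
    fix y z w
    assume "y \<in> insert x B0" "z \<in> insert x B0" and br: "br y z w \<noteq> 0"
    then consider "y \<in> B0" "z \<in> B0" | "y = x" "z = x" | "y = x" "z \<in> B0" | "y \<in> B0" "z = x"
      by auto
    then show "w \<in> insert x B0"
    proof cases
      case 1
      with br B0_br_closed show ?thesis by blast
    next
      case 2
      with br show ?thesis by (simp add: br_self)
    next
      case 3
      with br closed_x show ?thesis by blast
    next
      case 4
      with br closed_x[of y w] br_antisym[of x y w] show ?thesis by simp
    qed
  next
    fix y z
    assume "y \<in> insert x B0" and "z \<in> insert x B0"
    then consider "y \<in> B0" "z \<in> B0" | "y = x" "z = x" | "y = x" "z \<in> B0" | "y \<in> B0" "z = x"
      by auto
    then show "(\<Sum>w\<in>br_supp y z. br y z w * (\<psi>(x := c)) w) = 0"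
    proof cases
      case 1
      have "(\<psi>(x := c)) w = \<psi> w" if "w \<in> br_supp y z" for w
        using B0_br_closed[OF 1, of w] that x(1) by (auto simp: br_supp_def)
      then have "(\<Sum>w\<in>br_supp y z. br y z w * (\<psi>(x := c)) w) = (\<Sum>w\<in>br_supp y z. br y z w * \<psi> w)"
        by simp
      with B0_char_br[OF 1] show ?thesis by simp
    next
      case 2
      then show ?thesis by simp
    next
      case 3
      then show ?thesis using char_x by simp
    next
      case 4
      then show ?thesis using char_x[of y] unfolding sum_br_supp_antisym[of x y] by simp
    qed
  qed
qed

text \<open>The kernel \<open>N\<^sub>0\<close> of the module induced from the extended character with value \<open>0\<close> is a
  submodule between \<open>Wker m n \<psi>\<close> and \<open>Tfin\<close>. It misses the vacuum, and it is not \<open>Wker m n \<psi>\<close>: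
  otherwise \<open>x w\<^sub>\<psi>\<close> would lie in the kernel for the value \<open>1\<close>, which also contains
  \<open>x w\<^sub>\<psi> - w\<^sub>\<psi>\<close>, hence the vacuum.\<close>
lemma not_irreducible_of_extension:
  assumes x: "x \<notin> B0" and char: "\<And>c. subalg_char (insert x B0) (\<psi>(x := c))"
  shows "\<not> whittaker_module_irreducible m n \<psi>"
proof
  assume irr: "whittaker_module_irreducible m n \<psi>"
  define N0 where "N0 = ind_ker (insert x B0) (\<psi>(x := 0))"
  define N1 where "N1 = ind_ker (insert x B0) (\<psi>(x := 1))"
  have Wker_sub: "Wker m n \<psi> \<subseteq> ind_ker (insert x B0) (\<psi>(x := c))" for c
    unfolding Wker_eq_ind_ker ind_ker_def using x by (intro lspan_mono) (auto simp: ind_gens_def)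
  have "subsp N0 \<and> Wker m n \<psi> \<subseteq> N0 \<and> N0 \<subseteq> Tfin \<and> (\<forall>b. \<forall>f\<in>N0. tmul (mono [b]) f \<in> N0)"
    unfolding N0_def using subsp_ind_ker Wker_sub ind_ker_Tfin ind_ker_tmul_letter by blast
  with irr have "N0 = Wker m n \<psi> \<or> N0 = Tfin"
    unfolding whittaker_module_irreducible_def by blast
  moreover have "N0 \<noteq> Tfin"
    using subalg_char.vacuum_notin_ind_ker[OF char, of 0] mono_in_Tfin[of "[]"] unfolding N0_def by blast
  moreover have "N0 \<noteq> Wker m n \<psi>"
  proof
    assume "N0 = Wker m n \<psi>"
    moreover have "char_rel (\<psi>(x := 0)) [] x \<in> N0" unfolding N0_def by (rule char_rel_in_ind_ker) simp
    ultimately have x_N1: "mono [x] \<in> N1" using Wker_sub[of 1] by (auto simp: N1_def)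
    have "char_rel (\<psi>(x := 1)) [] x \<in> N1" unfolding N1_def by (rule char_rel_in_ind_ker) simp
    then have "(\<lambda>w. mono [x] w - mono [] w) \<in> N1" by simp
    with x_N1 have "(\<lambda>w. mono [x] w - (mono [x] w - mono [] w)) \<in> N1"
      unfolding N1_def by (rule subsp_diff[OF subsp_ind_ker])
    then show False using subalg_char.vacuum_notin_ind_ker[OF char] by (simp add: N1_def)
  qed
  ultimately show False by blast
qed

lemma irreducible_iff: "whittaker_module_irreducible m n \<psi> \<longleftrightarrow> \<psi> (I p) \<noteq> 0 \<and> \<psi> (J p) \<noteq> 0"
proof
  have "\<not> whittaker_module_irreducible m n \<psi>" if "X \<in> {I, J}" "\<psi> (X p) = 0" for X
    using that subalg_char_extension[OF that]
    by (intro not_irreducible_of_extension[of "X (int n - 1)"]) (auto simp: mem_B0)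
  then show "whittaker_module_irreducible m n \<psi> \<Longrightarrow> \<psi> (I p) \<noteq> 0 \<and> \<psi> (J p) \<noteq> 0" by blast
qed (blast intro: irreducible_if)

end

theorem theorem3p9:
  fixes m n :: nat and \<psi> :: "gb \<Rightarrow> complex"
  assumes "m > 0" and "even (m + n)" and "whittaker_fun m n \<psi>"
  shows "whittaker_module_irreducible m n \<psi> \<longleftrightarrow>
           \<psi> (I (int m + int n - 1)) * \<psi> (J (int m + int n - 1)) \<noteq> 0"
proof -
  interpret whittaker_setting m n \<psi> using assms by unfold_locales
  show ?thesis using irreducible_iff by (simp add: p_def)
qed

end
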